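(* Let $E$ be a contact Riemannian Lie algebroid with associated almost contact Riemannian structure $(F_E,\xi,\eta,g_E)$, let $\nabla$ be the Levi-Civita connection of $g_E$ and $N_E^{(3)}=\frac12\mathcal{L}_\xi F_E$. Then for all $s,s_1,s_2\in\Gamma(E)$: (i) $g_E(N_E^{(3)}(s_1),s_2)=g_E(s_1,N_E^{(3)}(s_2))$; (ii) $\nabla_s\xi=-F_E(s)-F_E(N_E^{(3)}(s))$; (iii) $F_E\circ N_E^{(3)}=-N_E^{(3)}\circ F_E$; (iv) $\operatorname{trace}N_E^{(3)}=0$, $\operatorname{trace}(N_E^{(3)}\circ F_E)=0$, $N_E^{(3)}(\xi)=0$, $\eta(N_E^{(3)}(s))=0$; (v) $(\nabla_{s_1}F_E)(s_2)+(\nabla_{F_E(s_1)}F_E)F_E(s_2)=2g_E(s_1,s_2)\xi-\eta(s_2)\big(s_1+N_E^{(3)}(s_1)+\eta(s_1)\xi\big)$.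
   Context: A Lie algebroid $(E,\rho_E,[\cdot,\cdot]_E)$ over $M$ is a vector bundle with anchor $\rho_E:E\to TM$ and Lie bracket on $\Gamma(E)$ with $[s_1,fs_2]_E=f[s_1,s_2]_E+\rho_E(s_1)(f)s_2$. For a 1-form $\eta$, $(d_E\eta)(s_1,s_2)=\frac12\{\rho_E(s_1)(\eta(s_2))-\rho_E(s_2)(\eta(s_1))-\eta([s_1,s_2]_E)\}$. For $E$ of rank $2m+1$, an almost contact Riemannian structure $(F_E,\xi,\eta,g_E)$: endomorphism $F_E$, $\xi\in\Gamma(E)$, $\eta\in\Gamma(E^* )$, bundle metric $g_E$ with $F_E^2=-I_E+\eta\otimes\xi$, $\eta(\xi)=1$, $g_E(F_Es_1,F_Es_2)=g_E(s_1,s_2)-\eta(s_1)\eta(s_2)$; fundamental form $\Omega_E(s_1,s_2)=g_E(s_1,F_Es_2)$. $E$ is contact Riemannian if also $\eta\wedge(d_E\eta)^m$ vanishes nowhere and $d_E\eta=\Omega_E$. $(\mathcal{L}_\xi F_E)(s)=[\xi,F_Es]_E-F_E[\xi,s]_E$. The Levi-Civita connection $\nabla$ is the unique $E$-connection ($\nabla_{fs}s'=f\nabla_ss'$, $\nabla_s(fs')=f\nabla_ss'+\rho_E(s)(f)s'$) that is torsion-free ($\nabla_{s_1}s_2-\nabla_{s_2}s_1=[s_1,s_2]_E$) and metric ($\rho_E(s)(g_E(s_1,s_2))=g_E(\nabla_ss_1,s_2)+g_E(s_1,\nabla_ss_2)$); $(\nabla_sF_E)s'=\nabla_s(F_Es')-F_E(\nabla_ss')$.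 *)

theory Defs
  imports Complex_Main "HOL-Combinatorics.Permutations"
begin

text \<open>M is the type 'm of base points. The vector bundle E is given by its fibres
E x, finite-dimensional subspaces of an ambient real vector space 'v (every vector bundle
over a manifold embeds in a trivial bundle). C is the algebra of smooth functions on M,
Gamma the C-module of smooth sections (functions 'm => 'v with values in the fibres).\<close>

definition sm :: "('m \<Rightarrow> real) \<Rightarrow> ('m \<Rightarrow> 'v::real_vector) \<Rightarrow> 'm \<Rightarrow> 'v" where
  "sm f s = (\<lambda>x. f x *\<^sub>R s x)"

definition sadd :: "('m \<Rightarrow> 'v::real_vector) \<Rightarrow> ('m \<Rightarrow> 'v) \<Rightarrow> 'm \<Rightarrow> 'v" where
  "sadd s t = (\<lambda>x. s x + t x)"

definition fapp :: "('m \<Rightarrow> 'v \<Rightarrow> 'w) \<Rightarrow> ('m \<Rightarrow> 'v) \<Rightarrow> 'm \<Rightarrow> 'w" where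
  "fapp T s = (\<lambda>x. T x (s x))"

definition lin_on :: "'v::real_vector set \<Rightarrow> ('v \<Rightarrow> 'w::real_vector) \<Rightarrow> bool" where
  "lin_on V f \<longleftrightarrow> (\<forall>u\<in>V. \<forall>v\<in>V. \<forall>a. f (a *\<^sub>R u + v) = a *\<^sub>R f u + f v)"

text \<open>Smooth vector bundle of rank r with algebra of smooth functions C and module of smooth
sections Gamma; the last clause says Gamma is of finite type (sections are combinations of
finitely many global sections with smooth, fibrewise linear coefficients), as holds for
every smooth vector bundle over a manifold.\<close>
definition vector_bundle ::
  "('m \<Rightarrow> 'v::real_vector set) \<Rightarrow> nat \<Rightarrow> ('m \<Rightarrow> real) set \<Rightarrow> ('m \<Rightarrow> 'v) set \<Rightarrow> bool" where
  "vector_bundle E r C \<Gamma> \<longleftrightarrow>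
     (\<forall>x. real_vector.subspace (E x) \<and> real_vector.dim (E x) = r) \<and>
     (\<forall>c. (\<lambda>x. c) \<in> C) \<and>
     (\<forall>f\<in>C. \<forall>h\<in>C. (\<lambda>x. f x + h x) \<in> C \<and> (\<lambda>x. f x * h x) \<in> C) \<and>
     (\<forall>s\<in>\<Gamma>. \<forall>x. s x \<in> E x) \<and>
     (\<lambda>x. 0) \<in> \<Gamma> \<and>
     (\<forall>s\<in>\<Gamma>. \<forall>t\<in>\<Gamma>. sadd s t \<in> \<Gamma>) \<and>
     (\<forall>f\<in>C. \<forall>s\<in>\<Gamma>. sm f s \<in> \<Gamma>) \<and>
     (\<forall>x. \<forall>v\<in>E x. \<exists>s\<in>\<Gamma>. s x = v) \<and>
     (\<exists>k e (\<theta> :: nat \<Rightarrow> 'm \<Rightarrow> 'v \<Rightarrow> real). (\<forall>i<k. e i \<in> \<Gamma> \<and> (\<forall>x. lin_on (E x) (\<theta> i x)) \<and>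
                        (\<forall>s\<in>\<Gamma>. fapp (\<theta> i) s \<in> C)) \<and>
               (\<forall>s\<in>\<Gamma>. s = (\<lambda>x. \<Sum>i<k. \<theta> i x (s x) *\<^sub>R e i x)))"

definition lie_algebroid ::
  "('m \<Rightarrow> 'v::real_vector set) \<Rightarrow> nat \<Rightarrow> ('m \<Rightarrow> real) set \<Rightarrow> ('m \<Rightarrow> 'v) set \<Rightarrow>
   (('m \<Rightarrow> 'v) \<Rightarrow> ('m \<Rightarrow> real) \<Rightarrow> ('m \<Rightarrow> real)) \<Rightarrow>
   (('m \<Rightarrow> 'v) \<Rightarrow> ('m \<Rightarrow> 'v) \<Rightarrow> ('m \<Rightarrow> 'v)) \<Rightarrow> bool" where
  "lie_algebroid E r C \<Gamma> \<rho> br \<longleftrightarrow>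
     vector_bundle E r C \<Gamma> \<and>
     (\<forall>s\<in>\<Gamma>. \<forall>f\<in>C. \<rho> s f \<in> C) \<and>
     (\<forall>s\<in>\<Gamma>. \<forall>f\<in>C. \<forall>h\<in>C.
        \<rho> s (\<lambda>x. f x + h x) = (\<lambda>x. \<rho> s f x + \<rho> s h x) \<and>
        \<rho> s (\<lambda>x. f x * h x) = (\<lambda>x. f x * \<rho> s h x + h x * \<rho> s f x)) \<and>
     (\<forall>s\<in>\<Gamma>. \<forall>f\<in>C. \<forall>c. \<rho> s (\<lambda>x. c * f x) = (\<lambda>x. c * \<rho> s f x)) \<and>
     (\<forall>s\<in>\<Gamma>. \<forall>t\<in>\<Gamma>. \<forall>f\<in>C. \<forall>h\<in>C.
        \<rho> (sadd s t) h = (\<lambda>x. \<rho> s h x + \<rho> t h x) \<and>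
        \<rho> (sm f s) h = (\<lambda>x. f x * \<rho> s h x)) \<and>
     (\<forall>s\<in>\<Gamma>. \<forall>t\<in>\<Gamma>. br s t \<in> \<Gamma>) \<and>
     (\<forall>s\<in>\<Gamma>. \<forall>t\<in>\<Gamma>. \<forall>u\<in>\<Gamma>.
        br (sadd s t) u = sadd (br s u) (br t u) \<and> br s (sadd t u) = sadd (br s t) (br s u)) \<and>
     (\<forall>s\<in>\<Gamma>. \<forall>t\<in>\<Gamma>. \<forall>c.
        br (sm (\<lambda>x. c) s) t = sm (\<lambda>x. c) (br s t) \<and> br s (sm (\<lambda>x. c) t) = sm (\<lambda>x. c) (br s t)) \<and>
     (\<forall>s\<in>\<Gamma>. \<forall>t\<in>\<Gamma>. br s t = (\<lambda>x. - br t s x)) \<and>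
     (\<forall>s\<in>\<Gamma>. \<forall>t\<in>\<Gamma>. \<forall>u\<in>\<Gamma>.
        (\<lambda>x. br s (br t u) x + br t (br u s) x + br u (br s t) x) = (\<lambda>x. 0)) \<and>
     (\<forall>s\<in>\<Gamma>. \<forall>t\<in>\<Gamma>. \<forall>f\<in>C. br s (sm f t) = sadd (sm f (br s t)) (sm (\<rho> s f) t))"

definition almost_contact_riemannian ::
  "('m \<Rightarrow> 'v::real_vector set) \<Rightarrow> ('m \<Rightarrow> real) set \<Rightarrow> ('m \<Rightarrow> 'v) set \<Rightarrow>
   ('m \<Rightarrow> 'v \<Rightarrow> 'v) \<Rightarrow> ('m \<Rightarrow> 'v) \<Rightarrow> ('m \<Rightarrow> 'v \<Rightarrow> real) \<Rightarrow> ('m \<Rightarrow> 'v \<Rightarrow> 'v \<Rightarrow> real) \<Rightarrow> bool" where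
  "almost_contact_riemannian E C \<Gamma> F \<xi> \<eta> g \<longleftrightarrow>
     (\<forall>x. lin_on (E x) (F x) \<and> (\<forall>v\<in>E x. F x v \<in> E x) \<and> \<xi> x \<in> E x \<and> lin_on (E x) (\<eta> x)) \<and>
     (\<forall>s\<in>\<Gamma>. fapp F s \<in> \<Gamma> \<and> fapp \<eta> s \<in> C) \<and> \<xi> \<in> \<Gamma> \<and>
     (\<forall>x. (\<forall>u\<in>E x. \<forall>v\<in>E x. g x u v = g x v u) \<and> (\<forall>w\<in>E x. lin_on (E x) (\<lambda>v. g x v w)) \<and>
          (\<forall>v\<in>E x. v \<noteq> 0 \<longrightarrow> g x v v > 0)) \<and>
     (\<forall>s\<in>\<Gamma>. \<forall>t\<in>\<Gamma>. (\<lambda>x. g x (s x) (t x)) \<in> C) \<and>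
     (\<forall>x. \<forall>v\<in>E x. F x (F x v) = - v + \<eta> x v *\<^sub>R \<xi> x) \<and>
     (\<forall>x. \<eta> x (\<xi> x) = 1) \<and>
     (\<forall>x. \<forall>u\<in>E x. \<forall>v\<in>E x. g x (F x u) (F x v) = g x u v - \<eta> x u * \<eta> x v)"

text \<open>d_E eta, with the paper's factor 1/2\<close>
definition dE1 ::
  "(('m \<Rightarrow> 'v) \<Rightarrow> ('m \<Rightarrow> real) \<Rightarrow> ('m \<Rightarrow> real)) \<Rightarrow> (('m \<Rightarrow> 'v) \<Rightarrow> ('m \<Rightarrow> 'v) \<Rightarrow> ('m \<Rightarrow> 'v)) \<Rightarrow>
   ('m \<Rightarrow> 'v \<Rightarrow> real) \<Rightarrow> ('m \<Rightarrow> 'v) \<Rightarrow> ('m \<Rightarrow> 'v) \<Rightarrow> 'm \<Rightarrow> real" where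
  "dE1 \<rho> br \<eta> s t = (\<lambda>x. (1/2) * (\<rho> s (fapp \<eta> t) x - \<rho> t (fapp \<eta> s) x - \<eta> x (br s t x)))"

definition fund_form :: "('m \<Rightarrow> 'v \<Rightarrow> 'v \<Rightarrow> real) \<Rightarrow> ('m \<Rightarrow> 'v \<Rightarrow> 'v) \<Rightarrow> ('m \<Rightarrow> 'v) \<Rightarrow> ('m \<Rightarrow> 'v) \<Rightarrow> 'm \<Rightarrow> real" where
  "fund_form g F s t = (\<lambda>x. g x (s x) (F x (t x)))"

text \<open>(eta wedge (d_E eta)^n)(s_0,...,s_2n), up to a nonzero constant normalisation factor
(irrelevant for vanishing).\<close>
definition contact_top_form ::
  "(('m \<Rightarrow> 'v) \<Rightarrow> ('m \<Rightarrow> real) \<Rightarrow> ('m \<Rightarrow> real)) \<Rightarrow> (('m \<Rightarrow> 'v) \<Rightarrow> ('m \<Rightarrow> 'v) \<Rightarrow> ('m \<Rightarrow> 'v)) \<Rightarrow>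
   ('m \<Rightarrow> 'v \<Rightarrow> real) \<Rightarrow> nat \<Rightarrow> (nat \<Rightarrow> 'm \<Rightarrow> 'v) \<Rightarrow> 'm \<Rightarrow> real" where
  "contact_top_form \<rho> br \<eta> n s = (\<lambda>x.
     \<Sum>p | p permutes {..2*n}. of_int (sign p) * \<eta> x (s (p 0) x) *
        (\<Prod>j\<in>{1..n}. dE1 \<rho> br \<eta> (s (p (2*j-1))) (s (p (2*j))) x))"

definition contact_riemannian_lie_algebroid ::
  "('m \<Rightarrow> 'v::real_vector set) \<Rightarrow> ('m \<Rightarrow> real) set \<Rightarrow> ('m \<Rightarrow> 'v) set \<Rightarrow>
   (('m \<Rightarrow> 'v) \<Rightarrow> ('m \<Rightarrow> real) \<Rightarrow> ('m \<Rightarrow> real)) \<Rightarrow> (('m \<Rightarrow> 'v) \<Rightarrow> ('m \<Rightarrow> 'v) \<Rightarrow> ('m \<Rightarrow> 'v)) \<Rightarrow>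
   nat \<Rightarrow> ('m \<Rightarrow> 'v \<Rightarrow> 'v) \<Rightarrow> ('m \<Rightarrow> 'v) \<Rightarrow> ('m \<Rightarrow> 'v \<Rightarrow> real) \<Rightarrow> ('m \<Rightarrow> 'v \<Rightarrow> 'v \<Rightarrow> real) \<Rightarrow> bool" where
  "contact_riemannian_lie_algebroid E C \<Gamma> \<rho> br n F \<xi> \<eta> g \<longleftrightarrow>
     lie_algebroid E (2*n+1) C \<Gamma> \<rho> br \<and>
     almost_contact_riemannian E C \<Gamma> F \<xi> \<eta> g \<and>
     (\<forall>x. \<exists>s. (\<forall>i\<le>2*n. s i \<in> \<Gamma>) \<and> contact_top_form \<rho> br \<eta> n s x \<noteq> 0) \<and>
     (\<forall>s\<in>\<Gamma>. \<forall>t\<in>\<Gamma>. dE1 \<rho> br \<eta> s t = fund_form g F s t)"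

definition levi_civita ::
  "('m \<Rightarrow> real) set \<Rightarrow> ('m \<Rightarrow> 'v::real_vector) set \<Rightarrow>
   (('m \<Rightarrow> 'v) \<Rightarrow> ('m \<Rightarrow> real) \<Rightarrow> ('m \<Rightarrow> real)) \<Rightarrow> (('m \<Rightarrow> 'v) \<Rightarrow> ('m \<Rightarrow> 'v) \<Rightarrow> ('m \<Rightarrow> 'v)) \<Rightarrow>
   ('m \<Rightarrow> 'v \<Rightarrow> 'v \<Rightarrow> real) \<Rightarrow> (('m \<Rightarrow> 'v) \<Rightarrow> ('m \<Rightarrow> 'v) \<Rightarrow> ('m \<Rightarrow> 'v)) \<Rightarrow> bool" where
  "levi_civita C \<Gamma> \<rho> br g nab \<longleftrightarrow>
     (\<forall>s\<in>\<Gamma>. \<forall>t\<in>\<Gamma>. nab s t \<in> \<Gamma>) \<and>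
     (\<forall>s\<in>\<Gamma>. \<forall>t\<in>\<Gamma>. \<forall>u\<in>\<Gamma>.
        nab (sadd s t) u = sadd (nab s u) (nab t u) \<and> nab s (sadd t u) = sadd (nab s t) (nab s u)) \<and>
     (\<forall>f\<in>C. \<forall>s\<in>\<Gamma>. \<forall>t\<in>\<Gamma>.
        nab (sm f s) t = sm f (nab s t) \<and> nab s (sm f t) = sadd (sm f (nab s t)) (sm (\<rho> s f) t)) \<and>
     (\<forall>s\<in>\<Gamma>. \<forall>t\<in>\<Gamma>. (\<lambda>x. nab s t x - nab t s x) = br s t) \<and>
     (\<forall>s\<in>\<Gamma>. \<forall>s1\<in>\<Gamma>. \<forall>s2\<in>\<Gamma>.
        \<rho> s (\<lambda>x. g x (s1 x) (s2 x)) = (\<lambda>x. g x (nab s s1 x) (s2 x) + g x (s1 x) (nab s s2 x)))"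

text \<open>N^(3) = 1/2 L_xi F, acting on sections\<close>
definition N3 :: "(('m \<Rightarrow> 'v) \<Rightarrow> ('m \<Rightarrow> 'v) \<Rightarrow> ('m \<Rightarrow> 'v::real_vector)) \<Rightarrow> ('m \<Rightarrow> 'v \<Rightarrow> 'v) \<Rightarrow> ('m \<Rightarrow> 'v) \<Rightarrow>
    ('m \<Rightarrow> 'v) \<Rightarrow> 'm \<Rightarrow> 'v" where
  "N3 br F \<xi> s = (\<lambda>x. (1/2) *\<^sub>R (br \<xi> (fapp F s) x - F x (br \<xi> s x)))"

definition covF :: "(('m \<Rightarrow> 'v) \<Rightarrow> ('m \<Rightarrow> 'v) \<Rightarrow> ('m \<Rightarrow> 'v::real_vector)) \<Rightarrow> ('m \<Rightarrow> 'v \<Rightarrow> 'v) \<Rightarrow>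
    ('m \<Rightarrow> 'v) \<Rightarrow> ('m \<Rightarrow> 'v) \<Rightarrow> 'm \<Rightarrow> 'v" where
  "covF nab F s t = (\<lambda>x. nab s (fapp F t) x - F x (nab s t x))"

text \<open>The fibre endomorphism at x induced by a (C-linear) operator T on sections.\<close>
definition pw :: "('m \<Rightarrow> 'v) set \<Rightarrow> (('m \<Rightarrow> 'v) \<Rightarrow> 'm \<Rightarrow> 'v) \<Rightarrow> 'm \<Rightarrow> 'v \<Rightarrow> 'v" where
  "pw \<Gamma> T x v = T (SOME s. s \<in> \<Gamma> \<and> s x = v) x"

definition fiber_trace :: "'v::real_vector set \<Rightarrow> ('v \<Rightarrow> 'v) \<Rightarrow> real" where
  "fiber_trace V T = (let B = (SOME B. real_vector.independent B \<and> real_vector.span B = V)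
     in \<Sum>b\<in>B. real_vector.representation B (T b) b)"

end

theory Submission
  imports Defs
begin

text \<open>
  Everything follows from the contact condition \<open>d\<eta> = \<Phi>\<close>. Differentiating it once more gives
  \<open>d\<Phi> = 0\<close>, because Jacobi and Leibniz force the anchor to be a Lie algebra morphism. With \<open>\<xi>\<close>
  inserted, \<open>d\<eta> = \<Phi>\<close> gives \<open>\<rho>(\<xi>)(\<eta> X) = \<eta>[\<xi>,X]\<close> and \<open>L\<^sub>\<xi>\<Phi> = 0\<close>; rewriting these with the
  torsion-free metric connection expresses \<open>g(\<nabla>\<^sub>X\<xi>, \<cdot>)\<close> through \<open>g\<close>, \<open>\<eta>\<close> and \<open>N = L\<^sub>\<xi>F / 2\<close>,
  which yields the symmetry of \<open>N\<close> and, by nondegeneracy of \<open>g\<close>, the formula for \<open>\<nabla>\<xi>\<close>.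
  Being \<open>C\<close>-linear, \<open>N\<close> is a tensor; it and \<open>N \<circ> F\<close> anticommute with the fibre automorphism
  \<open>F + \<eta> \<otimes> \<xi>\<close>, so their traces vanish. For (v), \<open>g((\<nabla>\<^sub>XF)Y, Z)\<close> is skew in \<open>Y, Z\<close>, its
  cyclic sum is \<open>d\<Phi> = 0\<close>, and comparing it with its values on \<open>FX, FY\<close> determines it, as for
  Christoffel symbols.
\<close>

section \<open>Linear maps on a subspace and their traces\<close>

lemma lin_on_zero:
  assumes "lin_on V f" and "real_vector.subspace V"
  shows "f 0 = 0"
proof -
  have "0 \<in> V" using assms(2) real_vector.subspace_0 by blast
  hence "f (1 *\<^sub>R 0 + 0) = 1 *\<^sub>R f 0 + f 0" using assms(1) unfolding lin_on_def by blast
  thus ?thesis by simp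
qed

lemma lin_on_add:
  assumes "lin_on V f" and "u \<in> V" and "v \<in> V"
  shows "f (u + v) = f u + f v"
proof -
  have "f (1 *\<^sub>R u + v) = 1 *\<^sub>R f u + f v" using assms unfolding lin_on_def by blast
  thus ?thesis by simp
qed

lemma lin_on_scaleR:
  assumes "lin_on V f" and "real_vector.subspace V" and "u \<in> V"
  shows "f (a *\<^sub>R u) = a *\<^sub>R f u"
proof -
  have "f (a *\<^sub>R u + 0) = a *\<^sub>R f u + f 0"
    using assms real_vector.subspace_0[OF assms(2)] unfolding lin_on_def by blast
  thus ?thesis using lin_on_zero[OF assms(1,2)] by simp
qed

lemma lin_on_sum:
  assumes f: "lin_on V f" and V: "real_vector.subspace V"
    and "finite I" and "\<And>i. i \<in> I \<Longrightarrow> v i \<in> V"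
  shows "f (\<Sum>i\<in>I. a i *\<^sub>R v i) = (\<Sum>i\<in>I. a i *\<^sub>R f (v i))"
  using assms(3,4)
proof (induction I rule: finite_induct)
  case empty
  then show ?case using lin_on_zero[OF f V] by simp
next
  case (insert i I)
  have "(\<Sum>i\<in>I. a i *\<^sub>R v i) \<in> V"
    using insert V by (intro real_vector.subspace_sum) (auto intro: real_vector.subspace_scale)
  moreover have "a i *\<^sub>R v i \<in> V" and "v i \<in> V"
    using insert V real_vector.subspace_scale by auto
  ultimately show ?case
    using insert lin_on_add[OF f] lin_on_scaleR[OF f V] by simp
qed

lemma fiber_trace_basis:
  assumes "real_vector.subspace V"
  obtains B where "independent B" and "real_vector.span B = V"
    and "\<And>T. fiber_trace V T = (\<Sum>b\<in>B. real_vector.representation B (T b) b)"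
proof -
  define B where "B = (SOME B. independent B \<and> real_vector.span B = V)"
  obtain B0 where B0: "B0 \<subseteq> V" "independent B0" "V \<subseteq> real_vector.span B0"
    by (rule real_vector.basis_exists[of V]) auto
  have "real_vector.span B0 = V" using real_vector.span_subspace[OF B0(1,3) assms] .
  hence "\<exists>B. independent B \<and> real_vector.span B = V" using B0(2) by blast
  hence "independent B \<and> real_vector.span B = V"
    unfolding B_def by (rule someI_ex)
  moreover have "fiber_trace V T = (\<Sum>b\<in>B. real_vector.representation B (T b) b)" for T
    unfolding fiber_trace_def Let_def B_def dependent_raw_def[symmetric] by (rule refl)
  ultimately show thesis using that by blast
qed

lemma fiber_trace_cong:
  assumes "real_vector.subspace V" and "\<And>v. v \<in> V \<Longrightarrow> T v = T' v"
  shows "fiber_trace V T = fiber_trace V T'"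
proof -
  obtain B where span: "real_vector.span B = V"
    and trace: "\<And>T. fiber_trace V T = (\<Sum>b\<in>B. real_vector.representation B (T b) b)"
    using fiber_trace_basis[OF assms(1)] by blast
  have "B \<subseteq> V" using real_vector.span_superset[of B] span by simp
  hence "\<And>b. b \<in> B \<Longrightarrow> T b = T' b" using assms(2) by blast
  thus ?thesis unfolding trace by (intro sum.cong refl) simp
qed

lemma fiber_trace_uminus:
  assumes "real_vector.subspace V" and "\<And>v. v \<in> V \<Longrightarrow> T v \<in> V"
  shows "fiber_trace V (\<lambda>v. - T v) = - fiber_trace V T"
proof -
  obtain B where B: "independent B" "real_vector.span B = V"
    and trace: "\<And>T. fiber_trace V T = (\<Sum>b\<in>B. real_vector.representation B (T b) b)"
    using fiber_trace_basis[OF assms(1)] by blast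
  have "B \<subseteq> V" using real_vector.span_superset[of B] B(2) by simp
  hence "real_vector.representation B (- T b) b = - real_vector.representation B (T b) b" if "b \<in> B" for b
    using real_vector.representation_neg[OF B(1)] B(2) assms(2) that by auto
  thus ?thesis unfolding trace by (simp add: sum_negf)
qed

text \<open>Only the finite-dimensional case needs an argument: for an infinite basis both sums are 0.\<close>
lemma fiber_trace_similar:
  assumes V: "real_vector.subspace V"
    and T: "lin_on V T" "\<And>v. v \<in> V \<Longrightarrow> T v \<in> V"
    and J: "lin_on V J" "\<And>v. v \<in> V \<Longrightarrow> J v \<in> V"
    and K: "lin_on V K" "\<And>v. v \<in> V \<Longrightarrow> K v \<in> V"
    and JK: "\<And>v. v \<in> V \<Longrightarrow> J (K v) = v"
  shows "fiber_trace V (K \<circ> T \<circ> J) = fiber_trace V T"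
proof -
  obtain B where ind: "independent B" and span: "real_vector.span B = V"
    and trace: "\<And>T. fiber_trace V T = (\<Sum>b\<in>B. real_vector.representation B (T b) b)"
    using fiber_trace_basis[OF V] by blast
  let ?R = "real_vector.representation B"
  have BV: "B \<subseteq> V" using real_vector.span_superset[of B] span by simp
  show ?thesis
  proof (cases "finite B")
    case False
    thus ?thesis unfolding trace by simp
  next
    case finB: True
    have inV: "v \<in> real_vector.span B" if "v \<in> V" for v
      using span that by simp
    have expand: "v = (\<Sum>c\<in>B. ?R v c *\<^sub>R c)" if "v \<in> V" for v
      using real_vector.sum_representation_eq[OF ind inV[OF that] finB] by simp
    have R_sum: "?R (\<Sum>c\<in>B. a c *\<^sub>R w c) b = (\<Sum>c\<in>B. a c * ?R (w c) b)"
      if w: "\<And>c. c \<in> B \<Longrightarrow> w c \<in> V" for a w b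
    proof -
      have "?R (\<Sum>c\<in>B. a c *\<^sub>R w c) = (\<lambda>b. \<Sum>c\<in>B. ?R (a c *\<^sub>R w c) b)"
        using w by (intro real_vector.representation_sum[OF ind]) (auto intro: real_vector.span_scale inV)
      moreover have "?R (a c *\<^sub>R w c) = (\<lambda>b. a c * ?R (w c) b)" if "c \<in> B" for c
        using real_vector.representation_scale[OF ind inV] w that by blast
      ultimately show ?thesis by simp
    qed
    have "?R (K (T (J b))) b = (\<Sum>c\<in>B. ?R (J b) c * ?R (K (T c)) b)" if b: "b \<in> B" for b
    proof -
      have Jb: "J b \<in> V" using b BV J(2) by auto
      have "T (J b) = (\<Sum>c\<in>B. ?R (J b) c *\<^sub>R T c)"
        by (subst expand[OF Jb]) (rule lin_on_sum[OF T(1) V finB], use BV in auto)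
      hence "K (T (J b)) = (\<Sum>c\<in>B. ?R (J b) c *\<^sub>R K (T c))"
        using lin_on_sum[OF K(1) V finB, of T "?R (J b)"] BV T(2) by auto
      thus ?thesis using R_sum[of "\<lambda>c. K (T c)" "?R (J b)" b] BV T(2) K(2) by auto
    qed
    hence "(\<Sum>b\<in>B. ?R (K (T (J b))) b) = (\<Sum>b\<in>B. \<Sum>c\<in>B. ?R (J b) c * ?R (K (T c)) b)"
      by simp
    also have "\<dots> = (\<Sum>c\<in>B. \<Sum>b\<in>B. ?R (K (T c)) b * ?R (J b) c)"
      by (subst sum.swap) (simp add: mult.commute)
    also have "\<dots> = (\<Sum>c\<in>B. ?R (T c) c)"
    proof (rule sum.cong)
      fix c assume c: "c \<in> B"
      hence KTc: "K (T c) \<in> V" using BV T(2) K(2) by auto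
      have "(\<Sum>b\<in>B. ?R (K (T c)) b * ?R (J b) c) = ?R (\<Sum>b\<in>B. ?R (K (T c)) b *\<^sub>R J b) c"
        using R_sum[of J "?R (K (T c))" c] BV J(2) by (simp add: subset_iff)
      also have "(\<Sum>b\<in>B. ?R (K (T c)) b *\<^sub>R J b) = J (\<Sum>b\<in>B. ?R (K (T c)) b *\<^sub>R b)"
        using lin_on_sum[OF J(1) V finB, of "\<lambda>b. b" "?R (K (T c))"] BV by (simp add: subset_iff)
      also have "(\<Sum>b\<in>B. ?R (K (T c)) b *\<^sub>R b) = K (T c)" using expand[OF KTc] by simp
      finally show "(\<Sum>b\<in>B. ?R (K (T c)) b * ?R (J b) c) = ?R (T c) c"
        using JK KTc T(2) c BV by auto
    qed simp
    finally show ?thesis unfolding trace by simp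
  qed
qed

lemma fiber_trace_eq_0_if_anticommutes:
  assumes V: "real_vector.subspace V"
    and T: "lin_on V T" "\<And>v. v \<in> V \<Longrightarrow> T v \<in> V"
    and J: "lin_on V J" "\<And>v. v \<in> V \<Longrightarrow> J v \<in> V"
    and K: "lin_on V K" "\<And>v. v \<in> V \<Longrightarrow> K v \<in> V"
    and JK: "\<And>v. v \<in> V \<Longrightarrow> J (K v) = v" and KJ: "\<And>v. v \<in> V \<Longrightarrow> K (J v) = v"
    and TJ: "\<And>v. v \<in> V \<Longrightarrow> T (J v) = - J (T v)"
  shows "fiber_trace V T = 0"
proof -
  have "(K \<circ> T \<circ> J) v = - T v" if "v \<in> V" for v
    using that TJ KJ T(2) J(2) lin_on_scaleR[OF K(1) V, of "J (T v)" "-1"] by simp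
  hence "fiber_trace V (K \<circ> T \<circ> J) = fiber_trace V (\<lambda>v. - T v)"
    by (rule fiber_trace_cong[OF V])
  hence "fiber_trace V T = fiber_trace V (\<lambda>v. - T v)"
    using fiber_trace_similar[OF V T J K JK] by simp
  also have "\<dots> = - fiber_trace V T" using fiber_trace_uminus[OF V T(2)] .
  finally show ?thesis by simp
qed

section \<open>Contact Riemannian Lie algebroids with their Levi-Civita connection\<close>

locale contact_riemannian_levi_civita =
  fixes E :: "'m \<Rightarrow> 'v::real_vector set" and C :: "('m \<Rightarrow> real) set"
    and \<Gamma> :: "('m \<Rightarrow> 'v) set" and \<rho> :: "('m \<Rightarrow> 'v) \<Rightarrow> ('m \<Rightarrow> real) \<Rightarrow> ('m \<Rightarrow> real)"
    and br :: "('m \<Rightarrow> 'v) \<Rightarrow> ('m \<Rightarrow> 'v) \<Rightarrow> ('m \<Rightarrow> 'v)" and n :: nat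
    and F :: "'m \<Rightarrow> 'v \<Rightarrow> 'v" and \<xi> :: "'m \<Rightarrow> 'v" and \<eta> :: "'m \<Rightarrow> 'v \<Rightarrow> real"
    and g :: "'m \<Rightarrow> 'v \<Rightarrow> 'v \<Rightarrow> real"
    and nab :: "('m \<Rightarrow> 'v) \<Rightarrow> ('m \<Rightarrow> 'v) \<Rightarrow> ('m \<Rightarrow> 'v)"
  assumes contact_riemannian: "contact_riemannian_lie_algebroid E C \<Gamma> \<rho> br n F \<xi> \<eta> g"
    and levi_civita: "levi_civita C \<Gamma> \<rho> br g nab"
begin

abbreviation Fsec :: "('m \<Rightarrow> 'v) \<Rightarrow> 'm \<Rightarrow> 'v" where
  "Fsec s \<equiv> \<lambda>x. F x (s x)"

lemma lie_algebroid: "lie_algebroid E (2*n+1) C \<Gamma> \<rho> br"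
  and almost_contact: "almost_contact_riemannian E C \<Gamma> F \<xi> \<eta> g"
  and d_eta_eq_fund_form: "s \<in> \<Gamma> \<Longrightarrow> t \<in> \<Gamma> \<Longrightarrow> dE1 \<rho> br \<eta> s t = fund_form g F s t"
  using contact_riemannian unfolding contact_riemannian_lie_algebroid_def by blast+

lemma vector_bundle: "vector_bundle E (2*n+1) C \<Gamma>"
  using lie_algebroid unfolding lie_algebroid_def by blast

lemma
  shows fibre_subspace: "real_vector.subspace (E x)"
    and C_const [simp]: "(\<lambda>x. c) \<in> C"
    and C_add [simp]: "f \<in> C \<Longrightarrow> h \<in> C \<Longrightarrow> (\<lambda>x. f x + h x) \<in> C"
    and C_mult [simp]: "f \<in> C \<Longrightarrow> h \<in> C \<Longrightarrow> (\<lambda>x. f x * h x) \<in> C"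
    and section_in_fibre [simp]: "s \<in> \<Gamma> \<Longrightarrow> s x \<in> E x"
    and zero_section [simp]: "(\<lambda>x. 0) \<in> \<Gamma>"
    and section_add [simp]: "s \<in> \<Gamma> \<Longrightarrow> t \<in> \<Gamma> \<Longrightarrow> (\<lambda>x. s x + t x) \<in> \<Gamma>"
    and section_scale [simp]: "f \<in> C \<Longrightarrow> s \<in> \<Gamma> \<Longrightarrow> (\<lambda>x. f x *\<^sub>R s x) \<in> \<Gamma>"
    and section_through: "v \<in> E x \<Longrightarrow> \<exists>s\<in>\<Gamma>. s x = v"
    and finite_type: "\<exists>k e (\<theta> :: nat \<Rightarrow> 'm \<Rightarrow> 'v \<Rightarrow> real).
           (\<forall>i<k. e i \<in> \<Gamma> \<and> (\<forall>x. lin_on (E x) (\<theta> i x)) \<and> (\<forall>s\<in>\<Gamma>. fapp (\<theta> i) s \<in> C)) \<and>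
           (\<forall>s\<in>\<Gamma>. s = (\<lambda>x. \<Sum>i<k. \<theta> i x (s x) *\<^sub>R e i x))"
  using vector_bundle unfolding vector_bundle_def sadd_def sm_def by blast+

lemma
  shows anchor_in_C [simp]: "s \<in> \<Gamma> \<Longrightarrow> f \<in> C \<Longrightarrow> \<rho> s f \<in> C"
    and anchor_add: "s \<in> \<Gamma> \<Longrightarrow> f \<in> C \<Longrightarrow> h \<in> C \<Longrightarrow> \<rho> s (\<lambda>x. f x + h x) x = \<rho> s f x + \<rho> s h x"
    and anchor_mult: "s \<in> \<Gamma> \<Longrightarrow> f \<in> C \<Longrightarrow> h \<in> C \<Longrightarrow>
          \<rho> s (\<lambda>x. f x * h x) x = f x * \<rho> s h x + h x * \<rho> s f x"
    and anchor_cmult: "s \<in> \<Gamma> \<Longrightarrow> f \<in> C \<Longrightarrow> \<rho> s (\<lambda>x. c * f x) x = c * \<rho> s f x"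
    and bracket_section [simp]: "s \<in> \<Gamma> \<Longrightarrow> t \<in> \<Gamma> \<Longrightarrow> br s t \<in> \<Gamma>"
    and bracket_add_right: "s \<in> \<Gamma> \<Longrightarrow> t \<in> \<Gamma> \<Longrightarrow> u \<in> \<Gamma> \<Longrightarrow>
          br s (\<lambda>x. t x + u x) = (\<lambda>x. br s t x + br s u x)"
    and bracket_antisym: "s \<in> \<Gamma> \<Longrightarrow> t \<in> \<Gamma> \<Longrightarrow> br s t x = - br t s x"
    and bracket_jacobi: "s \<in> \<Gamma> \<Longrightarrow> t \<in> \<Gamma> \<Longrightarrow> u \<in> \<Gamma> \<Longrightarrow>
          br s (br t u) x + br t (br u s) x + br u (br s t) x = 0"
    and bracket_leibniz: "s \<in> \<Gamma> \<Longrightarrow> t \<in> \<Gamma> \<Longrightarrow> f \<in> C \<Longrightarrow>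
          br s (\<lambda>x. f x *\<^sub>R t x) = (\<lambda>x. f x *\<^sub>R br s t x + \<rho> s f x *\<^sub>R t x)"
  using lie_algebroid unfolding lie_algebroid_def sadd_def sm_def by (blast | metis)+

lemma
  shows F_linear: "lin_on (E x) (F x)"
    and F_fibre [simp]: "v \<in> E x \<Longrightarrow> F x v \<in> E x"
    and xi_fibre [simp]: "\<xi> x \<in> E x"
    and eta_linear: "lin_on (E x) (\<eta> x)"
    and F_section [simp]: "s \<in> \<Gamma> \<Longrightarrow> Fsec s \<in> \<Gamma>"
    and eta_C [simp]: "s \<in> \<Gamma> \<Longrightarrow> (\<lambda>x. \<eta> x (s x)) \<in> C"
    and xi_section [simp]: "\<xi> \<in> \<Gamma>"
    and g_sym: "u \<in> E x \<Longrightarrow> v \<in> E x \<Longrightarrow> g x u v = g x v u"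
    and g_linear: "w \<in> E x \<Longrightarrow> lin_on (E x) (\<lambda>v. g x v w)"
    and g_pos: "v \<in> E x \<Longrightarrow> v \<noteq> 0 \<Longrightarrow> g x v v > 0"
    and g_C [simp]: "s \<in> \<Gamma> \<Longrightarrow> t \<in> \<Gamma> \<Longrightarrow> (\<lambda>x. g x (s x) (t x)) \<in> C"
    and F_F: "v \<in> E x \<Longrightarrow> F x (F x v) = - v + \<eta> x v *\<^sub>R \<xi> x"
    and eta_xi [simp]: "\<eta> x (\<xi> x) = 1"
    and g_F_F: "u \<in> E x \<Longrightarrow> v \<in> E x \<Longrightarrow> g x (F x u) (F x v) = g x u v - \<eta> x u * \<eta> x v"
  using almost_contact unfolding almost_contact_riemannian_def fapp_def by blast+

lemma
  shows nabla_section [simp]: "s \<in> \<Gamma> \<Longrightarrow> t \<in> \<Gamma> \<Longrightarrow> nab s t \<in> \<Gamma>"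
    and nabla_add_right: "s \<in> \<Gamma> \<Longrightarrow> t \<in> \<Gamma> \<Longrightarrow> u \<in> \<Gamma> \<Longrightarrow>
          nab s (\<lambda>x. t x + u x) = (\<lambda>x. nab s t x + nab s u x)"
    and nabla_leibniz: "f \<in> C \<Longrightarrow> s \<in> \<Gamma> \<Longrightarrow> t \<in> \<Gamma> \<Longrightarrow>
          nab s (\<lambda>x. f x *\<^sub>R t x) = (\<lambda>x. f x *\<^sub>R nab s t x + \<rho> s f x *\<^sub>R t x)"
    and torsion_free: "s \<in> \<Gamma> \<Longrightarrow> t \<in> \<Gamma> \<Longrightarrow> br s t x = nab s t x - nab t s x"
    and metric_compatible: "s \<in> \<Gamma> \<Longrightarrow> s1 \<in> \<Gamma> \<Longrightarrow> s2 \<in> \<Gamma> \<Longrightarrow>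
          \<rho> s (\<lambda>x. g x (s1 x) (s2 x)) x = g x (nab s s1 x) (s2 x) + g x (s1 x) (nab s s2 x)"
  using levi_civita unfolding levi_civita_def sadd_def sm_def by (blast | metis)+

lemma fibre_add [simp]: "u \<in> E x \<Longrightarrow> v \<in> E x \<Longrightarrow> u + v \<in> E x"
  using fibre_subspace by (rule real_vector.subspace_add)

lemma fibre_scaleR [simp]: "u \<in> E x \<Longrightarrow> a *\<^sub>R u \<in> E x"
  using fibre_subspace by (rule real_vector.subspace_scale)

lemma fibre_zero [simp]: "0 \<in> E x"
  using fibre_subspace by (rule real_vector.subspace_0)

lemma fibre_minus [simp]: "u \<in> E x \<Longrightarrow> - u \<in> E x"
  using fibre_subspace by (rule real_vector.subspace_neg)

lemma fibre_diff [simp]: "u \<in> E x \<Longrightarrow> v \<in> E x \<Longrightarrow> u - v \<in> E x"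
  using fibre_subspace by (rule real_vector.subspace_diff)

lemma F_add: "u \<in> E x \<Longrightarrow> v \<in> E x \<Longrightarrow> F x (u + v) = F x u + F x v"
  using lin_on_add[OF F_linear] .

lemma F_scaleR: "u \<in> E x \<Longrightarrow> F x (a *\<^sub>R u) = a *\<^sub>R F x u"
  using lin_on_scaleR[OF F_linear fibre_subspace] .

lemma F_zero [simp]: "F x 0 = 0"
  using lin_on_zero[OF F_linear fibre_subspace] .

lemma F_minus: "u \<in> E x \<Longrightarrow> F x (- u) = - F x u"
  using F_scaleR[of u x "-1"] by simp

lemma F_diff: "u \<in> E x \<Longrightarrow> v \<in> E x \<Longrightarrow> F x (u - v) = F x u - F x v"
  using F_add[of u x "- v"] F_minus[of v x] by simp

lemma eta_add: "u \<in> E x \<Longrightarrow> v \<in> E x \<Longrightarrow> \<eta> x (u + v) = \<eta> x u + \<eta> x v"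
  using lin_on_add[OF eta_linear] .

lemma eta_scaleR: "u \<in> E x \<Longrightarrow> \<eta> x (a *\<^sub>R u) = a * \<eta> x u"
  using lin_on_scaleR[OF eta_linear fibre_subspace] by simp

lemma eta_zero [simp]: "\<eta> x 0 = 0"
  using lin_on_zero[OF eta_linear fibre_subspace] .

lemma eta_minus: "u \<in> E x \<Longrightarrow> \<eta> x (- u) = - \<eta> x u"
  using eta_scaleR[of u x "-1"] by simp

lemma eta_diff: "u \<in> E x \<Longrightarrow> v \<in> E x \<Longrightarrow> \<eta> x (u - v) = \<eta> x u - \<eta> x v"
  using eta_add[of u x "- v"] eta_minus[of v x] by simp

lemma g_add_left: "u \<in> E x \<Longrightarrow> v \<in> E x \<Longrightarrow> w \<in> E x \<Longrightarrow> g x (u + v) w = g x u w + g x v w"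
  using lin_on_add[OF g_linear] .

lemma g_scaleR_left: "u \<in> E x \<Longrightarrow> w \<in> E x \<Longrightarrow> g x (a *\<^sub>R u) w = a * g x u w"
  using lin_on_scaleR[OF g_linear fibre_subspace] by simp

lemma g_minus_left: "u \<in> E x \<Longrightarrow> w \<in> E x \<Longrightarrow> g x (- u) w = - g x u w"
  using g_scaleR_left[of u x w "-1"] by simp

lemma g_diff_left: "u \<in> E x \<Longrightarrow> v \<in> E x \<Longrightarrow> w \<in> E x \<Longrightarrow> g x (u - v) w = g x u w - g x v w"
  using g_add_left[of u x "- v" w] g_minus_left[of v x w] by simp

lemma g_zero_left [simp]: "w \<in> E x \<Longrightarrow> g x 0 w = 0"
  using g_scaleR_left[of 0 x w 0] by simp

lemma g_zero_right [simp]: "w \<in> E x \<Longrightarrow> g x w 0 = 0"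
  using g_zero_left[of w x] g_sym[of w x 0] by simp

lemma g_add_right: "u \<in> E x \<Longrightarrow> v \<in> E x \<Longrightarrow> w \<in> E x \<Longrightarrow> g x w (u + v) = g x w u + g x w v"
  using g_add_left[of u x v w] g_sym[of w x] by simp

lemma g_scaleR_right: "u \<in> E x \<Longrightarrow> w \<in> E x \<Longrightarrow> g x w (a *\<^sub>R u) = a * g x w u"
  using g_scaleR_left[of u x w a] g_sym[of w x] by simp

lemma g_minus_right: "u \<in> E x \<Longrightarrow> w \<in> E x \<Longrightarrow> g x w (- u) = - g x w u"
  using g_scaleR_right[of u x w "-1"] by simp

lemma g_diff_right: "u \<in> E x \<Longrightarrow> v \<in> E x \<Longrightarrow> w \<in> E x \<Longrightarrow> g x w (u - v) = g x w u - g x w v"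
  using g_add_right[of u x "- v" w] g_minus_right[of v x w] by simp

lemma C_cmult [simp]: "f \<in> C \<Longrightarrow> (\<lambda>x. c * f x) \<in> C"
  using C_mult[of "\<lambda>x. c" f] by simp

lemma C_minus [simp]: "f \<in> C \<Longrightarrow> (\<lambda>x. - f x) \<in> C"
  using C_cmult[of f "-1"] by simp

lemma C_diff [simp]: "f \<in> C \<Longrightarrow> h \<in> C \<Longrightarrow> (\<lambda>x. f x - h x) \<in> C"
  using C_add[of f "\<lambda>x. - h x"] by simp

lemma section_cscale [simp]: "s \<in> \<Gamma> \<Longrightarrow> (\<lambda>x. c *\<^sub>R s x) \<in> \<Gamma>"
  using section_scale[of "\<lambda>x. c" s] by simp

lemma section_minus [simp]: "s \<in> \<Gamma> \<Longrightarrow> (\<lambda>x. - s x) \<in> \<Gamma>"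
  using section_cscale[of s "-1"] by simp

lemma section_diff [simp]: "s \<in> \<Gamma> \<Longrightarrow> t \<in> \<Gamma> \<Longrightarrow> (\<lambda>x. s x - t x) \<in> \<Gamma>"
  using section_add[of s "\<lambda>x. - t x"] by simp

lemma anchor_const [simp]: "s \<in> \<Gamma> \<Longrightarrow> \<rho> s (\<lambda>x. c) x = 0"
proof -
  assume s: "s \<in> \<Gamma>"
  have "\<rho> s (\<lambda>x. 1) x = 0" using anchor_mult[OF s, of "\<lambda>x. 1" "\<lambda>x. 1" x] by simp
  thus ?thesis using anchor_cmult[OF s, of "\<lambda>x. 1" c x] by simp
qed

lemma anchor_minus: "s \<in> \<Gamma> \<Longrightarrow> f \<in> C \<Longrightarrow> \<rho> s (\<lambda>x. - f x) x = - \<rho> s f x"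
  using anchor_cmult[of s f "-1" x] by simp

lemma anchor_diff: "s \<in> \<Gamma> \<Longrightarrow> f \<in> C \<Longrightarrow> h \<in> C \<Longrightarrow> \<rho> s (\<lambda>x. f x - h x) x = \<rho> s f x - \<rho> s h x"
  using anchor_add[of s f "\<lambda>x. - h x" x] anchor_minus[of s h x] by simp

lemma bracket_cscale_right: "s \<in> \<Gamma> \<Longrightarrow> t \<in> \<Gamma> \<Longrightarrow> br s (\<lambda>x. c *\<^sub>R t x) = (\<lambda>x. c *\<^sub>R br s t x)"
  using bracket_leibniz[of s t "\<lambda>x. c"] by simp

lemma bracket_minus_right: "s \<in> \<Gamma> \<Longrightarrow> t \<in> \<Gamma> \<Longrightarrow> br s (\<lambda>x. - t x) = (\<lambda>x. - br s t x)"
  using bracket_cscale_right[of s t "-1"] by simp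

lemma bracket_diff_right: "s \<in> \<Gamma> \<Longrightarrow> t \<in> \<Gamma> \<Longrightarrow> u \<in> \<Gamma> \<Longrightarrow>
    br s (\<lambda>x. t x - u x) = (\<lambda>x. br s t x - br s u x)"
  using bracket_add_right[of s t "\<lambda>x. - u x"] bracket_minus_right[of s u] by simp

lemma bracket_leibniz_left: "f \<in> C \<Longrightarrow> s \<in> \<Gamma> \<Longrightarrow> t \<in> \<Gamma> \<Longrightarrow>
    br (\<lambda>x. f x *\<^sub>R s x) t x = f x *\<^sub>R br s t x - \<rho> t f x *\<^sub>R s x"
  using bracket_antisym[of "\<lambda>x. f x *\<^sub>R s x" t x] bracket_leibniz[of t s f]
    bracket_antisym[of s t x] by (simp add: algebra_simps)

lemma bracket_self: "s \<in> \<Gamma> \<Longrightarrow> br s s x = 0"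
proof -
  assume s: "s \<in> \<Gamma>"
  have "br s s x + br s s x = 0"
    using arg_cong[OF bracket_antisym[OF s s, of x], of "\<lambda>z. br s s x + z"] by simp
  hence "(2::real) *\<^sub>R br s s x = 0" by (simp add: scaleR_2)
  thus ?thesis by simp
qed

lemma bracket_zero_right: "s \<in> \<Gamma> \<Longrightarrow> br s (\<lambda>x. 0) x = 0"
  using bracket_cscale_right[of s s 0] by simp

lemma nabla_cscale_right: "s \<in> \<Gamma> \<Longrightarrow> t \<in> \<Gamma> \<Longrightarrow> nab s (\<lambda>x. c *\<^sub>R t x) = (\<lambda>x. c *\<^sub>R nab s t x)"
  using nabla_leibniz[of "\<lambda>x. c" s t] by simp

lemma nabla_minus_right: "s \<in> \<Gamma> \<Longrightarrow> t \<in> \<Gamma> \<Longrightarrow> nab s (\<lambda>x. - t x) = (\<lambda>x. - nab s t x)"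
  using nabla_cscale_right[of s t "-1"] by simp

lemma nabla_diff_right: "s \<in> \<Gamma> \<Longrightarrow> t \<in> \<Gamma> \<Longrightarrow> u \<in> \<Gamma> \<Longrightarrow>
    nab s (\<lambda>x. t x - u x) = (\<lambda>x. nab s t x - nab s u x)"
  using nabla_add_right[of s t "\<lambda>x. - u x"] nabla_minus_right[of s u] by simp

lemma nabla_zero_right: "s \<in> \<Gamma> \<Longrightarrow> nab s (\<lambda>x. 0) = (\<lambda>x. 0)"
  using nabla_cscale_right[of s s 0] by simp

lemma xi_nonzero: "\<xi> x \<noteq> 0"
proof
  assume "\<xi> x = 0"
  thus False using eta_xi[of x] by simp
qed

lemma F_xi [simp]: "F x (\<xi> x) = 0"
proof -
  define a where "a = \<eta> x (F x (\<xi> x))"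
  have FF\<xi>: "F x (F x (\<xi> x)) = 0" using F_F[of "\<xi> x" x] by simp
  hence F\<xi>: "F x (\<xi> x) = a *\<^sub>R \<xi> x" using F_F[of "F x (\<xi> x)" x] unfolding a_def by simp
  have "a *\<^sub>R a *\<^sub>R \<xi> x = 0" using FF\<xi> F_scaleR[of "\<xi> x" x a] by (simp add: F\<xi>)
  hence "a = 0" using xi_nonzero[of x] by simp
  thus ?thesis using F\<xi> by simp
qed

lemma eta_F [simp]: "v \<in> E x \<Longrightarrow> \<eta> x (F x v) = 0"
proof -
  assume v: "v \<in> E x"
  have "F x (F x (F x v)) = - F x v + \<eta> x (F x v) *\<^sub>R \<xi> x" using F_F[of "F x v" x] v by simp
  moreover have "F x (F x (F x v)) = - F x v"
    using v by (simp add: F_F F_diff F_scaleR)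
  ultimately have "\<eta> x (F x v) *\<^sub>R \<xi> x = 0" by simp
  thus ?thesis using xi_nonzero[of x] by simp
qed

lemma eta_eq_g_xi: "v \<in> E x \<Longrightarrow> \<eta> x v = g x v (\<xi> x)"
  using g_F_F[of v x "\<xi> x"] by simp

lemma g_xi_eq_eta: "v \<in> E x \<Longrightarrow> g x (\<xi> x) v = \<eta> x v"
  using eta_eq_g_xi g_sym by simp

lemma g_F_skew: "u \<in> E x \<Longrightarrow> v \<in> E x \<Longrightarrow> g x (F x u) v = - g x u (F x v)"
proof -
  assume u: "u \<in> E x" and v: "v \<in> E x"
  have "g x u (F x v) = g x (F x u) (F x (F x v))" using g_F_F[of u x "F x v"] u v by simp
  also have "\<dots> = - g x (F x u) v"
    using u v by (simp add: F_F g_diff_right g_scaleR_right flip: eta_eq_g_xi)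
  finally show ?thesis by simp
qed

lemma g_nondegenerate:
  assumes "w \<in> E x" and "\<And>s. s \<in> \<Gamma> \<Longrightarrow> g x w (s x) = 0"
  shows "w = 0"
proof -
  obtain s where "s \<in> \<Gamma>" "s x = w" using section_through[OF assms(1)] by blast
  hence "g x w w = 0" using assms(2) by blast
  thus ?thesis using g_pos[OF assms(1)] by force
qed

text \<open>The anchor is a Lie algebra morphism: compare the Jacobi identity for \<open>s, t, f \<xi>\<close>
  with \<open>f\<close> times the one for \<open>s, t, \<xi>\<close>; the difference is a multiple of \<open>\<xi>\<close>.\<close>
lemma anchor_bracket:
  assumes s: "s \<in> \<Gamma>" and t: "t \<in> \<Gamma>" and f: "f \<in> C"
  shows "\<rho> (br s t) f x = \<rho> s (\<rho> t f) x - \<rho> t (\<rho> s f) x"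
proof -
  let ?f\<xi> = "\<lambda>y. f y *\<^sub>R \<xi> y"
  have f\<xi>: "?f\<xi> \<in> \<Gamma>" using f by simp
  have "br t ?f\<xi> = (\<lambda>y. f y *\<^sub>R br t \<xi> y + \<rho> t f y *\<^sub>R \<xi> y)"
    using bracket_leibniz f t by simp
  hence jacobi_s: "br s (br t ?f\<xi>) x = f x *\<^sub>R br s (br t \<xi>) x + \<rho> s f x *\<^sub>R br t \<xi> x
      + (\<rho> t f x *\<^sub>R br s \<xi> x + \<rho> s (\<rho> t f) x *\<^sub>R \<xi> x)"
    using s t f by (simp add: bracket_add_right bracket_leibniz)
  have "br ?f\<xi> s = (\<lambda>y. f y *\<^sub>R br \<xi> s y - \<rho> s f y *\<^sub>R \<xi> y)"
    using bracket_leibniz_left[OF f xi_section s] by auto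
  hence jacobi_t: "br t (br ?f\<xi> s) x = f x *\<^sub>R br t (br \<xi> s) x + \<rho> t f x *\<^sub>R br \<xi> s x
      - (\<rho> s f x *\<^sub>R br t \<xi> x + \<rho> t (\<rho> s f) x *\<^sub>R \<xi> x)"
    using s t f by (simp add: bracket_diff_right bracket_leibniz)
  have jacobi_f\<xi>: "br ?f\<xi> (br s t) x = f x *\<^sub>R br \<xi> (br s t) x - \<rho> (br s t) f x *\<^sub>R \<xi> x"
    using bracket_leibniz_left[OF f xi_section] s t by simp
  have \<xi>_s: "br \<xi> s x = - br s \<xi> x" using bracket_antisym[OF xi_section s] .
  have combine: "(a - b - c) *\<^sub>R u = (r *\<^sub>R A + p *\<^sub>R T + (q *\<^sub>R S + a *\<^sub>R u))
      + (r *\<^sub>R B + q *\<^sub>R (- S) - (p *\<^sub>R T + b *\<^sub>R u)) + (r *\<^sub>R D - c *\<^sub>R u) - r *\<^sub>R (A + B + D)"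
    for a b c r p q :: real and A B D S T u :: 'v
    by (simp add: algebra_simps)
  have "(\<rho> s (\<rho> t f) x - \<rho> t (\<rho> s f) x - \<rho> (br s t) f x) *\<^sub>R \<xi> x
      = br s (br t ?f\<xi>) x + br t (br ?f\<xi> s) x + br ?f\<xi> (br s t) x
        - f x *\<^sub>R (br s (br t \<xi>) x + br t (br \<xi> s) x + br \<xi> (br s t) x)"
    unfolding jacobi_s jacobi_t jacobi_f\<xi> \<xi>_s by (rule combine)
  also have "\<dots> = 0" using bracket_jacobi[OF s t f\<xi>] bracket_jacobi[OF s t xi_section] by simp
  finally show ?thesis using xi_nonzero[of x] by simp
qed

section \<open>Consequences of the contact condition\<close>

lemma fund_form_eq_d_eta:
  assumes "s \<in> \<Gamma>" and "t \<in> \<Gamma>"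
  shows "(\<lambda>x. g x (s x) (F x (t x)))
    = (\<lambda>x. (1/2) * (\<rho> s (\<lambda>x. \<eta> x (t x)) x - \<rho> t (\<lambda>x. \<eta> x (s x)) x - \<eta> x (br s t x)))"
  using d_eta_eq_fund_form[OF assms] unfolding dE1_def fund_form_def fapp_def by simp

lemma d_eta:
  assumes "s \<in> \<Gamma>" and "t \<in> \<Gamma>"
  shows "(1/2) * (\<rho> s (\<lambda>x. \<eta> x (t x)) x - \<rho> t (\<lambda>x. \<eta> x (s x)) x - \<eta> x (br s t x))
    = g x (s x) (F x (t x))"
  using fun_cong[OF fund_form_eq_d_eta[OF assms], of x] by simp

lemma anchor_xi_eta: "X \<in> \<Gamma> \<Longrightarrow> \<rho> \<xi> (\<lambda>x. \<eta> x (X x)) x = \<eta> x (br \<xi> X x)"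
  using d_eta[OF xi_section, of X x] g_xi_eq_eta[of "F x (X x)" x] by simp

lemma eta_bracket_xi_F: "X \<in> \<Gamma> \<Longrightarrow> \<eta> x (br \<xi> (Fsec X) x) = 0"
  using anchor_xi_eta[of "Fsec X" x] by simp

lemma eta_jacobi:
  assumes X: "X \<in> \<Gamma>" and Y: "Y \<in> \<Gamma>" and Z: "Z \<in> \<Gamma>"
  shows "\<eta> x (br (br X Y) Z x) + \<eta> x (br (br Y Z) X x) + \<eta> x (br (br Z X) Y x) = 0"
proof -
  have "br (br X Y) Z x + br (br Y Z) X x + br (br Z X) Y x
      = - (br Z (br X Y) x + br X (br Y Z) x + br Y (br Z X) x)"
    using bracket_antisym[of "br X Y" Z x] bracket_antisym[of "br Y Z" X x]
      bracket_antisym[of "br Z X" Y x] X Y Z by simp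
  also have "\<dots> = 0" using bracket_jacobi[OF Z X Y] by simp
  finally have "br (br X Y) Z x + br (br Y Z) X x + br (br Z X) Y x = 0" .
  hence "\<eta> x (br (br X Y) Z x + br (br Y Z) X x + br (br Z X) Y x) = 0" by simp
  thus ?thesis using X Y Z by (simp add: eta_add)
qed

text \<open>\<open>d\<Phi> = d(d\<eta>) = 0\<close>, written out as a cyclic sum.\<close>
lemma d_fund_form_eq_0:
  assumes X: "X \<in> \<Gamma>" and Y: "Y \<in> \<Gamma>" and Z: "Z \<in> \<Gamma>"
  shows "\<rho> X (\<lambda>x. g x (Y x) (F x (Z x))) x - g x (br X Y x) (F x (Z x))
       + \<rho> Y (\<lambda>x. g x (Z x) (F x (X x))) x - g x (br Y Z x) (F x (X x))
       + \<rho> Z (\<lambda>x. g x (X x) (F x (Y x))) x - g x (br Z X x) (F x (Y x)) = 0"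
proof -
  have anchor_d_eta: "\<rho> A (\<lambda>x. g x (B x) (F x (D x))) x = (1/2) * (\<rho> A (\<rho> B (\<lambda>x. \<eta> x (D x))) x
      - \<rho> A (\<rho> D (\<lambda>x. \<eta> x (B x))) x - \<rho> A (\<lambda>x. \<eta> x (br B D x)) x)"
    if "A \<in> \<Gamma>" "B \<in> \<Gamma>" "D \<in> \<Gamma>" for A B D
  proof -
    let ?f1 = "\<rho> B (\<lambda>x. \<eta> x (D x))" and ?f2 = "\<rho> D (\<lambda>x. \<eta> x (B x))"
      and ?f3 = "\<lambda>x. \<eta> x (br B D x)"
    have C: "?f1 \<in> C" "?f2 \<in> C" "?f3 \<in> C" using that by simp_all
    have "\<rho> A (\<lambda>x. (1/2) * (?f1 x - ?f2 x - ?f3 x)) x = (1/2) * \<rho> A (\<lambda>x. ?f1 x - ?f2 x - ?f3 x) x"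
      using C that(1) by (intro anchor_cmult) simp_all
    also have "\<rho> A (\<lambda>x. ?f1 x - ?f2 x - ?f3 x) x = \<rho> A (\<lambda>x. ?f1 x - ?f2 x) x - \<rho> A ?f3 x"
      using C that(1) anchor_diff[of A "\<lambda>x. ?f1 x - ?f2 x" ?f3 x] by simp
    also have "\<rho> A (\<lambda>x. ?f1 x - ?f2 x) x = \<rho> A ?f1 x - \<rho> A ?f2 x"
      using C that(1) anchor_diff by simp
    finally show ?thesis unfolding fund_form_eq_d_eta[OF that(2,3)] .
  qed
  have d_eta_bracket: "g x (br A B x) (F x (D x)) = (1/2) * (\<rho> A (\<rho> B (\<lambda>x. \<eta> x (D x))) x
      - \<rho> B (\<rho> A (\<lambda>x. \<eta> x (D x))) x - \<rho> D (\<lambda>x. \<eta> x (br A B x)) x - \<eta> x (br (br A B) D x))"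
    if "A \<in> \<Gamma>" "B \<in> \<Gamma>" "D \<in> \<Gamma>" for A B D
    using d_eta[of "br A B" D x] anchor_bracket[of A B "\<lambda>x. \<eta> x (D x)" x] that by simp
  show ?thesis
    using anchor_d_eta[OF X Y Z] anchor_d_eta[OF Y Z X] anchor_d_eta[OF Z X Y]
      d_eta_bracket[OF X Y Z] d_eta_bracket[OF Y Z X] d_eta_bracket[OF Z X Y] eta_jacobi[OF X Y Z, of x]
    by simp
qed

lemma anchor_eta:
  assumes X: "X \<in> \<Gamma>" and Y: "Y \<in> \<Gamma>"
  shows "\<rho> X (\<lambda>x. \<eta> x (Y x)) x = \<eta> x (nab X Y x) + g x (nab X \<xi> x) (Y x)"
proof -
  have "(\<lambda>x. \<eta> x (Y x)) = (\<lambda>x. g x (Y x) (\<xi> x))" using Y eta_eq_g_xi by simp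
  thus ?thesis using metric_compatible[OF X Y xi_section, of x] X Y g_sym by (simp add: eta_eq_g_xi)
qed

lemma g_nabla_xi_skew:
  assumes X: "X \<in> \<Gamma>" and Y: "Y \<in> \<Gamma>"
  shows "g x (nab X \<xi> x) (Y x) - g x (nab Y \<xi> x) (X x) = 2 * g x (X x) (F x (Y x))"
proof -
  have "\<eta> x (br X Y x) = \<eta> x (nab X Y x) - \<eta> x (nab Y X x)"
    unfolding torsion_free[OF X Y] using X Y by (simp add: eta_diff)
  thus ?thesis using d_eta[OF X Y, of x] anchor_eta[OF X Y, of x] anchor_eta[OF Y X, of x] by simp
qed

lemma lie_xi_g:
  assumes X: "X \<in> \<Gamma>" and Y: "Y \<in> \<Gamma>"
  shows "\<rho> \<xi> (\<lambda>x. g x (X x) (Y x)) x - g x (br \<xi> X x) (Y x) - g x (X x) (br \<xi> Y x)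
     = g x (nab X \<xi> x) (Y x) + g x (nab Y \<xi> x) (X x)"
  using metric_compatible[OF xi_section X Y, of x] X Y g_sym
  by (simp add: torsion_free g_diff_left g_diff_right)

lemma lie_xi_fund_form:
  assumes X: "X \<in> \<Gamma>" and Y: "Y \<in> \<Gamma>"
  shows "\<rho> \<xi> (\<lambda>x. g x (X x) (F x (Y x))) x - g x (br \<xi> X x) (F x (Y x)) - g x (X x) (F x (br \<xi> Y x)) = 0"
proof -
  have "(\<lambda>x. g x (Y x) (F x (\<xi> x))) = (\<lambda>x. 0)" using Y by simp
  moreover have "(\<lambda>x. g x (\<xi> x) (F x (X x))) = (\<lambda>x. 0)" using X by (simp add: g_xi_eq_eta)
  moreover have "g x (br Y \<xi> x) (F x (X x)) = g x (X x) (F x (br \<xi> Y x))"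
    using bracket_antisym[OF Y xi_section, of x] X Y g_sym
    by (simp add: g_minus_left g_minus_right F_minus g_F_skew)
  ultimately show ?thesis using d_fund_form_eq_0[OF xi_section X Y, of x] X Y by simp
qed

section \<open>The tensor \<open>N\<close>\<close>

abbreviation N :: "('m \<Rightarrow> 'v) \<Rightarrow> 'm \<Rightarrow> 'v" where
  "N \<equiv> N3 br F \<xi>"

lemma N_apply: "N s x = (1/2) *\<^sub>R (br \<xi> (Fsec s) x - F x (br \<xi> s x))"
  unfolding N3_def fapp_def ..

lemma N_section [simp]: "s \<in> \<Gamma> \<Longrightarrow> N s \<in> \<Gamma>"
  unfolding N3_def fapp_def by simp

lemma N_fibre [simp]: "s \<in> \<Gamma> \<Longrightarrow> N s x \<in> E x"
  using N_section section_in_fibre by blast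

lemma N_xi: "N \<xi> = (\<lambda>x. 0)"
  using bracket_self[OF xi_section] bracket_zero_right[OF xi_section] unfolding N3_def fapp_def by simp

lemma eta_N: "s \<in> \<Gamma> \<Longrightarrow> \<eta> x (N s x) = 0"
  unfolding N_apply by (simp add: eta_scaleR eta_diff eta_bracket_xi_F)

lemma F_F_section: "s \<in> \<Gamma> \<Longrightarrow> Fsec (Fsec s) = (\<lambda>x. - s x + \<eta> x (s x) *\<^sub>R \<xi> x)"
  using F_F by simp

lemma bracket_xi_F_F:
  assumes s: "s \<in> \<Gamma>"
  shows "br \<xi> (Fsec (Fsec s)) x = - br \<xi> s x + \<eta> x (br \<xi> s x) *\<^sub>R \<xi> x"
proof -
  have "br \<xi> (\<lambda>y. - s y + \<eta> y (s y) *\<^sub>R \<xi> y) x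
      = - br \<xi> s x + (\<eta> x (s x) *\<^sub>R br \<xi> \<xi> x + \<rho> \<xi> (\<lambda>y. \<eta> y (s y)) x *\<^sub>R \<xi> x)"
    using s by (simp add: bracket_add_right bracket_diff_right bracket_minus_right bracket_leibniz)
  thus ?thesis unfolding F_F_section[OF s] using bracket_self[OF xi_section] anchor_xi_eta[OF s] by simp
qed

lemma F_N: assumes s: "s \<in> \<Gamma>" shows "F x (N s x) = - N (Fsec s) x"
proof -
  have FN: "F x (N s x) = (1/2) *\<^sub>R (F x (br \<xi> (Fsec s) x) + br \<xi> s x - \<eta> x (br \<xi> s x) *\<^sub>R \<xi> x)"
    unfolding N_apply using s by (simp add: F_scaleR F_diff F_F)
  moreover have NF: "N (Fsec s) x
      = (1/2) *\<^sub>R (- br \<xi> s x + \<eta> x (br \<xi> s x) *\<^sub>R \<xi> x - F x (br \<xi> (Fsec s) x))"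
    unfolding N_apply using bracket_xi_F_F[OF s] by simp
  show ?thesis unfolding FN NF by (simp add: algebra_simps)
qed

lemma N_add:
  assumes "s \<in> \<Gamma>" and "t \<in> \<Gamma>"
  shows "N (\<lambda>x. s x + t x) x = N s x + N t x"
proof -
  have "Fsec (\<lambda>x. s x + t x) = (\<lambda>x. F x (s x) + F x (t x))" using assms by (simp add: F_add)
  thus ?thesis unfolding N_apply using assms by (simp add: bracket_add_right F_add algebra_simps)
qed

lemma N_scale:
  assumes "f \<in> C" and "s \<in> \<Gamma>"
  shows "N (\<lambda>x. f x *\<^sub>R s x) x = f x *\<^sub>R N s x"
proof -
  have "Fsec (\<lambda>x. f x *\<^sub>R s x) = (\<lambda>x. f x *\<^sub>R F x (s x))" using assms by (simp add: F_scaleR)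
  thus ?thesis unfolding N_apply using assms by (simp add: bracket_leibniz F_add F_scaleR algebra_simps)
qed

lemma N_F_F: assumes s: "s \<in> \<Gamma>" shows "N (Fsec (Fsec s)) x = - N s x"
proof -
  have "N (\<lambda>y. - s y + \<eta> y (s y) *\<^sub>R \<xi> y) x = N (\<lambda>y. - s y) x + N (\<lambda>y. \<eta> y (s y) *\<^sub>R \<xi> y) x"
    using s by (intro N_add) simp_all
  also have "N (\<lambda>y. \<eta> y (s y) *\<^sub>R \<xi> y) x = 0" using s N_scale[of "\<lambda>y. \<eta> y (s y)" \<xi> x] N_xi by simp
  also have "N (\<lambda>y. - s y) x = - N s x" using s N_scale[of "\<lambda>y. -1" s x] by simp
  finally show ?thesis unfolding F_F_section[OF s] by simp
qed

text \<open>From \<open>L\<^sub>\<xi>\<Phi> = 0\<close> and \<open>d\<eta> = \<Phi>\<close>.\<close>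
lemma g_nabla_xi_F:
  assumes X: "X \<in> \<Gamma>" and Y: "Y \<in> \<Gamma>"
  shows "g x (nab X \<xi> x) (F x (Y x)) = - g x (X x) (N Y x) - g x (X x) (Y x) + \<eta> x (X x) * \<eta> x (Y x)"
proof -
  have FY: "Fsec Y \<in> \<Gamma>" using Y by simp
  have "g x (X x) (N Y x) = (1/2) * (g x (X x) (br \<xi> (Fsec Y) x) - g x (X x) (F x (br \<xi> Y x)))"
    unfolding N_apply using X Y by (simp add: g_scaleR_right g_diff_right)
  moreover have "g x (Fsec Y x) (F x (X x)) = g x (X x) (Y x) - \<eta> x (X x) * \<eta> x (Y x)"
    using X Y g_F_F g_sym by simp
  ultimately show ?thesis
    using lie_xi_g[OF X FY, of x] lie_xi_fund_form[OF X Y, of x] g_nabla_xi_skew[OF FY X, of x]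
    by (simp add: algebra_simps)
qed

lemma g_nabla_xi_xi: assumes X: "X \<in> \<Gamma>" shows "g x (nab X \<xi> x) (\<xi> x) = 0"
proof -
  have "(\<lambda>x. g x (\<xi> x) (\<xi> x)) = (\<lambda>x. 1)" by (simp add: g_xi_eq_eta)
  hence "\<rho> X (\<lambda>x. g x (\<xi> x) (\<xi> x)) x = 0" using X by simp
  thus ?thesis using metric_compatible[OF X xi_section xi_section, of x] X g_sym by simp
qed

lemma g_nabla_xi:
  assumes X: "X \<in> \<Gamma>" and Z: "Z \<in> \<Gamma>"
  shows "g x (nab X \<xi> x) (Z x) = g x (X x) (F x (Z x)) + g x (X x) (N (Fsec Z) x)"
proof -
  have "g x (nab X \<xi> x) (F x (F x (Z x))) = - g x (X x) (N (Fsec Z) x) - g x (X x) (F x (Z x))"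
    using g_nabla_xi_F[OF X, of "Fsec Z" x] Z by simp
  moreover have "g x (nab X \<xi> x) (F x (F x (Z x)))
      = - g x (nab X \<xi> x) (Z x) + \<eta> x (Z x) * g x (nab X \<xi> x) (\<xi> x)"
    using X Z by (simp add: F_F g_diff_right g_scaleR_right)
  ultimately show ?thesis using g_nabla_xi_xi[OF X, of x] by simp
qed

lemma g_N_F_sym:
  assumes X: "X \<in> \<Gamma>" and Y: "Y \<in> \<Gamma>"
  shows "g x (X x) (N (Fsec Y) x) = g x (Y x) (N (Fsec X) x)"
  using g_nabla_xi_skew[OF X Y, of x] g_nabla_xi[OF X Y, of x] g_nabla_xi[OF Y X, of x]
    g_F_skew[of "Y x" x "X x"] g_sym[of "F x (Y x)" x "X x"] X Y by simp

lemma g_N_sym: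
  assumes X: "X \<in> \<Gamma>" and Y: "Y \<in> \<Gamma>"
  shows "g x (N X x) (Y x) = g x (X x) (N Y x)"
proof -
  have "g x (N X x) (Y x) = - g x (Y x) (N (Fsec (Fsec X)) x)"
    using N_F_F[OF X] X Y g_sym by (simp add: g_minus_right)
  also have "\<dots> = - g x (F x (X x)) (N (Fsec Y) x)"
    using g_N_F_sym[OF Y, of "Fsec X" x] X by simp
  also have "\<dots> = g x (F x (X x)) (F x (N Y x))"
    using F_N[OF Y] X Y by (simp add: g_minus_right)
  also have "\<dots> = g x (X x) (N Y x)" using g_F_F X Y eta_N by simp
  finally show ?thesis .
qed

lemma nabla_xi:
  assumes X: "X \<in> \<Gamma>"
  shows "nab X \<xi> x = - F x (X x) - F x (N X x)"
proof -
  let ?w = "nab X \<xi> x - (- F x (X x) - F x (N X x))"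
  have "g x ?w (Z x) = 0" if Z: "Z \<in> \<Gamma>" for Z
  proof -
    have "g x (X x) (F x (Z x)) = - g x (F x (X x)) (Z x)" using g_F_skew X Z by simp
    moreover have "g x (X x) (N (Fsec Z) x) = - g x (F x (N X x)) (Z x)"
      using g_N_F_sym[OF X Z, of x] F_N[OF X, of x] g_sym[of "Z x" x] X Z by (simp add: g_minus_left)
    ultimately show ?thesis using g_nabla_xi[OF X Z, of x] X Z by (simp add: g_diff_left g_minus_left)
  qed
  moreover have "?w \<in> E x" using X by simp
  ultimately have "?w = 0" by (intro g_nondegenerate)
  thus ?thesis by simp
qed

text \<open>\<open>N\<close> is \<open>C\<close>-linear, so by finite type it is a tensor: \<open>N s x\<close> depends on \<open>s x\<close> only.\<close>
lemma N_eq_0_if_section_vanishes: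
  assumes s: "s \<in> \<Gamma>" and s0: "s x = 0"
  shows "N s x = 0"
proof -
  obtain k e and \<theta> :: "nat \<Rightarrow> 'm \<Rightarrow> 'v \<Rightarrow> real" where
    frame: "\<forall>i<k. e i \<in> \<Gamma> \<and> (\<forall>x. lin_on (E x) (\<theta> i x)) \<and> (\<forall>s\<in>\<Gamma>. fapp (\<theta> i) s \<in> C)"
    and expand: "\<forall>s\<in>\<Gamma>. s = (\<lambda>x. \<Sum>i<k. \<theta> i x (s x) *\<^sub>R e i x)"
    using finite_type by blast
  define P where "P m = (\<lambda>y. \<Sum>i<m. \<theta> i y (s y) *\<^sub>R e i y)" for m
  have \<theta>C: "(\<lambda>y. \<theta> i y (s y)) \<in> C" and e: "e i \<in> \<Gamma>" if "i < k" for i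
    using frame that s unfolding fapp_def by blast+
  have partial_sums: "P m \<in> \<Gamma> \<and> N (P m) x = (\<Sum>i<m. \<theta> i x (s x) *\<^sub>R N (e i) x)" if "m \<le> k" for m
    using that
  proof (induction m)
    case 0
    then show ?case unfolding P_def using N_scale[of "\<lambda>y. 0" "\<lambda>y. 0" x] by simp
  next
    case (Suc m)
    hence IH: "P m \<in> \<Gamma>" "N (P m) x = (\<Sum>i<m. \<theta> i x (s x) *\<^sub>R N (e i) x)" and m: "m < k" by auto
    have P_Suc: "P (Suc m) = (\<lambda>y. P m y + \<theta> m y (s y) *\<^sub>R e m y)" unfolding P_def by simp
    have "N (P (Suc m)) x = N (P m) x + N (\<lambda>y. \<theta> m y (s y) *\<^sub>R e m y) x"
      unfolding P_Suc using IH(1) \<theta>C[OF m] e[OF m] by (intro N_add) simp_all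
    also have "N (\<lambda>y. \<theta> m y (s y) *\<^sub>R e m y) x = \<theta> m x (s x) *\<^sub>R N (e m) x"
      using N_scale[OF \<theta>C[OF m] e[OF m]] .
    finally show ?case using IH \<theta>C[OF m] e[OF m] unfolding P_Suc by simp
  qed
  have "P k = s" using expand s unfolding P_def by auto
  hence "N s x = (\<Sum>i<k. \<theta> i x (s x) *\<^sub>R N (e i) x)" using partial_sums[of k] by simp
  also have "\<dots> = 0"
    using lin_on_zero[OF _ fibre_subspace, of x "\<theta> _ x"] frame s0 by simp
  finally show ?thesis .
qed

lemma N_local:
  assumes s: "s \<in> \<Gamma>" and t: "t \<in> \<Gamma>" and "s x = t x"
  shows "N s x = N t x"
proof -
  have "N (\<lambda>y. s y + (-1) *\<^sub>R t y) x = N s x - N t x"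
    using N_add[OF s, of "\<lambda>y. (-1) *\<^sub>R t y" x] N_scale[of "\<lambda>y. -1" t x] t by simp
  moreover have "N (\<lambda>y. s y + (-1) *\<^sub>R t y) x = 0"
    using assms by (intro N_eq_0_if_section_vanishes) simp_all
  ultimately show ?thesis by simp
qed

lemma pw_N: assumes s: "s \<in> \<Gamma>" shows "pw \<Gamma> N x (s x) = N s x"
proof -
  let ?t = "SOME t. t \<in> \<Gamma> \<and> t x = s x"
  have "\<exists>t. t \<in> \<Gamma> \<and> t x = s x" using s by blast
  hence "?t \<in> \<Gamma> \<and> ?t x = s x" by (rule someI_ex)
  hence "N ?t x = N s x" using s by (intro N_local) simp_all
  thus ?thesis unfolding pw_def by simp
qed

lemma
  assumes "v \<in> E x"
  shows pw_N_fibre: "pw \<Gamma> N x v \<in> E x"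
    and pw_N_F: "pw \<Gamma> N x (F x v) = - F x (pw \<Gamma> N x v)"
    and eta_pw_N: "\<eta> x (pw \<Gamma> N x v) = 0"
proof -
  obtain s where s: "s \<in> \<Gamma>" "s x = v" using section_through[OF assms] by blast
  show "pw \<Gamma> N x v \<in> E x" "\<eta> x (pw \<Gamma> N x v) = 0"
    unfolding s(2)[symmetric] pw_N[OF s(1)] using s eta_N by simp_all
  show "pw \<Gamma> N x (F x v) = - F x (pw \<Gamma> N x v)"
    unfolding s(2)[symmetric] using pw_N[of "Fsec s" x] pw_N[OF s(1), of x] F_N[OF s(1), of x] s by simp
qed

lemma pw_N_xi: "pw \<Gamma> N x (\<xi> x) = 0"
  using pw_N[OF xi_section, of x] N_xi by simp

lemma pw_N_linear: "lin_on (E x) (pw \<Gamma> N x)"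
  unfolding lin_on_def
proof (intro ballI allI)
  fix u v a assume u: "u \<in> E x" and v: "v \<in> E x"
  obtain su where su: "su \<in> \<Gamma>" "su x = u" using section_through[OF u] by blast
  obtain sv where sv: "sv \<in> \<Gamma>" "sv x = v" using section_through[OF v] by blast
  have "pw \<Gamma> N x (a *\<^sub>R u + v) = N (\<lambda>y. a *\<^sub>R su y + sv y) x"
    using pw_N[of "\<lambda>y. a *\<^sub>R su y + sv y" x] su sv by simp
  also have "\<dots> = a *\<^sub>R N su x + N sv x"
    using su sv N_add[of "\<lambda>y. a *\<^sub>R su y" sv x] N_scale[of "\<lambda>y. a" su x] by simp
  finally show "pw \<Gamma> N x (a *\<^sub>R u + v) = a *\<^sub>R pw \<Gamma> N x u + pw \<Gamma> N x v"
    using pw_N[OF su(1), of x] pw_N[OF sv(1), of x] su sv by simp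
qed

text \<open>\<open>F + \<eta> \<otimes> \<xi>\<close> is invertible, with inverse \<open>-F + \<eta> \<otimes> \<xi>\<close>.\<close>
lemma fiber_trace_eq_0_if_anticommutes_F_plus_eta_xi:
  assumes T: "lin_on (E x) T" "\<And>v. v \<in> E x \<Longrightarrow> T v \<in> E x"
    and TJ: "\<And>v. v \<in> E x \<Longrightarrow> T (F x v + \<eta> x v *\<^sub>R \<xi> x) = - (F x (T v) + \<eta> x (T v) *\<^sub>R \<xi> x)"
  shows "fiber_trace (E x) T = 0"
proof -
  let ?J = "\<lambda>v. F x v + \<eta> x v *\<^sub>R \<xi> x" and ?K = "\<lambda>v. - F x v + \<eta> x v *\<^sub>R \<xi> x"
  have J: "lin_on (E x) ?J" and K: "lin_on (E x) ?K"
    unfolding lin_on_def by (simp_all add: F_add F_scaleR eta_add eta_scaleR algebra_simps)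
  have JK: "?J (?K v) = v" and KJ: "?K (?J v) = v" if v: "v \<in> E x" for v
  proof -
    have "F x (- F x v + \<eta> x v *\<^sub>R \<xi> x) = v - \<eta> x v *\<^sub>R \<xi> x"
      using v F_add[of "- F x v" x "\<eta> x v *\<^sub>R \<xi> x"] by (simp add: F_minus F_scaleR F_F)
    moreover have "F x (F x v + \<eta> x v *\<^sub>R \<xi> x) = - v + \<eta> x v *\<^sub>R \<xi> x"
      using v by (simp add: F_add F_scaleR F_F)
    ultimately show "?J (?K v) = v" "?K (?J v) = v"
      using v by (simp_all add: eta_add eta_diff eta_scaleR)
  qed
  show ?thesis
  proof (rule fiber_trace_eq_0_if_anticommutes[of "E x" T ?J ?K])
    show "real_vector.subspace (E x)" by (rule fibre_subspace)
  qed (use T J K JK KJ TJ in simp_all)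
qed

lemma trace_N: "fiber_trace (E x) (pw \<Gamma> N x) = 0"
proof (rule fiber_trace_eq_0_if_anticommutes_F_plus_eta_xi[OF pw_N_linear pw_N_fibre])
  fix v assume v: "v \<in> E x"
  have "pw \<Gamma> N x (F x v + \<eta> x v *\<^sub>R \<xi> x) = pw \<Gamma> N x (F x v) + \<eta> x v *\<^sub>R pw \<Gamma> N x (\<xi> x)"
    using lin_on_add[OF pw_N_linear] lin_on_scaleR[OF pw_N_linear fibre_subspace] v by simp
  thus "pw \<Gamma> N x (F x v + \<eta> x v *\<^sub>R \<xi> x) = - (F x (pw \<Gamma> N x v) + \<eta> x (pw \<Gamma> N x v) *\<^sub>R \<xi> x)"
    using pw_N_xi pw_N_F[OF v] eta_pw_N[OF v] by simp
qed

lemma trace_N_F: "fiber_trace (E x) (pw \<Gamma> N x \<circ> F x) = 0"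
proof (rule fiber_trace_eq_0_if_anticommutes_F_plus_eta_xi)
  show "lin_on (E x) (pw \<Gamma> N x \<circ> F x)"
    unfolding lin_on_def comp_def
    using lin_on_add[OF pw_N_linear] lin_on_scaleR[OF pw_N_linear fibre_subspace] by (simp add: F_add F_scaleR)
  fix v assume v: "v \<in> E x"
  show "(pw \<Gamma> N x \<circ> F x) v \<in> E x" using pw_N_fibre[of "F x v"] v by simp
  have "F x (F x v + \<eta> x v *\<^sub>R \<xi> x) = F x (F x v)" using v by (simp add: F_add F_scaleR)
  thus "(pw \<Gamma> N x \<circ> F x) (F x v + \<eta> x v *\<^sub>R \<xi> x)
     = - (F x ((pw \<Gamma> N x \<circ> F x) v) + \<eta> x ((pw \<Gamma> N x \<circ> F x) v) *\<^sub>R \<xi> x)"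
    using pw_N_F[of "F x v"] eta_pw_N[of "F x v"] v by simp
qed

section \<open>The covariant derivative of \<open>F\<close>\<close>

abbreviation covPhi :: "('m \<Rightarrow> 'v) \<Rightarrow> ('m \<Rightarrow> 'v) \<Rightarrow> 'v \<Rightarrow> 'm \<Rightarrow> real" where
  "covPhi X Y v x \<equiv> g x (covF nab F X Y x) v"

lemma covF_apply: "covF nab F X Y x = nab X (Fsec Y) x - F x (nab X Y x)"
  unfolding covF_def fapp_def ..

lemma covF_fibre [simp]: "X \<in> \<Gamma> \<Longrightarrow> Y \<in> \<Gamma> \<Longrightarrow> covF nab F X Y x \<in> E x"
  unfolding covF_apply by simp

lemma covPhi_skew:
  assumes X: "X \<in> \<Gamma>" and Y: "Y \<in> \<Gamma>" and Z: "Z \<in> \<Gamma>"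
  shows "covPhi X Y (Z x) x = - covPhi X Z (Y x) x"
proof -
  have "(\<lambda>x. g x (F x (Y x)) (Z x)) = (\<lambda>x. - g x (Y x) (F x (Z x)))" using g_F_skew Y Z by simp
  hence "\<rho> X (\<lambda>x. g x (F x (Y x)) (Z x)) x = - \<rho> X (\<lambda>x. g x (Y x) (F x (Z x))) x"
    using anchor_minus X Y Z by simp
  thus ?thesis
    unfolding covF_apply
    using metric_compatible[OF X, of "Fsec Y" Z x] metric_compatible[OF X Y, of "Fsec Z" x] X Y Z g_sym
    by (simp add: g_diff_left g_diff_right g_F_skew)
qed

text \<open>The cyclic identity is \<open>d\<Phi> = 0\<close>, rewritten with the torsion-free metric connection.\<close>
lemma covPhi_cyclic:
  assumes X: "X \<in> \<Gamma>" and Y: "Y \<in> \<Gamma>" and Z: "Z \<in> \<Gamma>"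
  shows "covPhi X Y (Z x) x + covPhi Y Z (X x) x + covPhi Z X (Y x) x = 0"
proof -
  have expand: "\<rho> A (\<lambda>x. g x (B x) (F x (D x))) x - g x (br A B x) (F x (D x))
      = covPhi A D (B x) x - g x (F x (B x)) (nab A D x) + g x (nab B A x) (F x (D x))"
    if A: "A \<in> \<Gamma>" and B: "B \<in> \<Gamma>" and D: "D \<in> \<Gamma>" for A B D
  proof -
    have "g x (F x (nab A D x)) (B x) = - g x (F x (B x)) (nab A D x)"
      using A B D g_F_skew[of "nab A D x" x "B x"] g_F_skew[of "B x" x "nab A D x"] g_sym by simp
    thus ?thesis
      unfolding covF_apply torsion_free[OF A B]
      using metric_compatible[OF A B, of "Fsec D" x] A B D g_sym by (simp add: g_diff_left g_diff_right)
  qed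
  have "covPhi X Z (Y x) x + covPhi Y X (Z x) x + covPhi Z Y (X x) x = 0"
    using d_fund_form_eq_0[OF X Y Z, of x] expand[OF X Y Z] expand[OF Y Z X] expand[OF Z X Y]
      X Y Z g_sym by simp
  thus ?thesis using covPhi_skew[OF X Z Y, of x] covPhi_skew[OF Y X Z, of x] covPhi_skew[OF Z Y X, of x]
    by simp
qed

lemma covPhi_F_second:
  assumes X: "X \<in> \<Gamma>" and Y: "Y \<in> \<Gamma>" and Z: "Z \<in> \<Gamma>"
  shows "covPhi X (Fsec Y) (Z x) x - covPhi X Y (F x (Z x)) x
     = g x (nab X \<xi> x) (Y x) * \<eta> x (Z x) + \<eta> x (Y x) * g x (nab X \<xi> x) (Z x)"
proof -
  have covPhi_FY: "covPhi X (Fsec Y) (Z x) x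
      = g x (nab X (Fsec (Fsec Y)) x) (Z x) + g x (nab X (Fsec Y) x) (F x (Z x))"
    unfolding covF_apply using X Y Z by (simp add: g_diff_left g_F_skew)
  have covPhi_FZ: "covPhi X Y (F x (Z x)) x
      = g x (nab X (Fsec Y) x) (F x (Z x)) - g x (nab X Y x) (Z x) + \<eta> x (nab X Y x) * \<eta> x (Z x)"
    unfolding covF_apply using X Y Z by (simp add: g_diff_left g_F_F)
  have "nab X (Fsec (Fsec Y)) x
      = \<eta> x (Y x) *\<^sub>R nab X \<xi> x + \<rho> X (\<lambda>y. \<eta> y (Y y)) x *\<^sub>R \<xi> x - nab X Y x"
    unfolding F_F_section[OF Y] using X Y
    by (simp add: nabla_add_right nabla_diff_right nabla_leibniz algebra_simps)
  hence nabla_FFY: "g x (nab X (Fsec (Fsec Y)) x) (Z x) = \<eta> x (Y x) * g x (nab X \<xi> x) (Z x)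
      + \<rho> X (\<lambda>y. \<eta> y (Y y)) x * \<eta> x (Z x) - g x (nab X Y x) (Z x)"
    using X Y Z by (simp add: g_add_left g_diff_left g_scaleR_left g_xi_eq_eta)
  show ?thesis unfolding covPhi_FY covPhi_FZ nabla_FFY anchor_eta[OF X Y] by (simp add: algebra_simps)
qed

lemma covPhi_xi:
  assumes W: "W \<in> \<Gamma>" and U: "U \<in> \<Gamma>"
  shows "covPhi W U (\<xi> x) x = - g x (nab W \<xi> x) (F x (U x))"
proof -
  have "covF nab F W \<xi> x = - F x (nab W \<xi> x)"
    unfolding covF_apply using nabla_zero_right[OF W] by simp
  hence "covPhi W \<xi> (U x) x = g x (nab W \<xi> x) (F x (U x))"
    using W U g_F_skew by (simp add: g_minus_left)
  thus ?thesis using covPhi_skew[OF W U xi_section, of x] by simp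
qed

lemma g_nabla_F_xi:
  assumes U: "U \<in> \<Gamma>" and W: "W \<in> \<Gamma>"
  shows "g x (nab (Fsec U) \<xi> x) (W x) = g x (U x) (W x) - \<eta> x (U x) * \<eta> x (W x) - g x (N U x) (W x)"
proof -
  have "F x (N (Fsec U) x) = N U x"
    using F_N[OF U, of x] F_F[of "N U x" x] U eta_N by (simp add: F_minus)
  hence "nab (Fsec U) \<xi> x = U x - \<eta> x (U x) *\<^sub>R \<xi> x - N U x"
    using nabla_xi[of "Fsec U" x] U F_F by simp
  thus ?thesis using U W by (simp add: g_diff_left g_scaleR_left g_xi_eq_eta)
qed

lemma covPhi_F_F_swap:
  assumes U: "U \<in> \<Gamma>" and V: "V \<in> \<Gamma>" and W: "W \<in> \<Gamma>"
  shows "covPhi (Fsec U) (Fsec V) (W x) x - covPhi (Fsec V) (Fsec U) (W x) x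
    = covPhi W U (V x) x + \<eta> x (V x) * (- g x (N U x) (W x) - g x (U x) (W x) + \<eta> x (W x) * \<eta> x (U x))
      - \<eta> x (U x) * (- g x (N V x) (W x) - g x (V x) (W x) + \<eta> x (W x) * \<eta> x (V x))"
proof -
  have FU: "Fsec U \<in> \<Gamma>" and FV: "Fsec V \<in> \<Gamma>" using U V by simp_all
  have "covPhi W U (F x (F x (V x))) x = - covPhi W U (V x) x + \<eta> x (V x) * covPhi W U (\<xi> x) x"
    using W U V by (simp add: F_F g_diff_right g_scaleR_right)
  thus ?thesis
    using covPhi_cyclic[OF FU FV W, of x] covPhi_skew[OF FV W FU, of x] covPhi_F_second[OF W U FV, of x]
      covPhi_xi[OF W U, of x] g_nabla_xi_F[OF W U, of x] g_nabla_xi_F[OF W V, of x] U V W g_sym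
    by (simp add: algebra_simps)
qed

lemma covPhi_F_F_skew:
  assumes U: "U \<in> \<Gamma>" and V: "V \<in> \<Gamma>" and W: "W \<in> \<Gamma>"
  shows "covPhi (Fsec U) (Fsec V) (W x) x + covPhi (Fsec U) (Fsec W) (V x) x
    = (g x (U x) (W x) - \<eta> x (U x) * \<eta> x (W x) - g x (N U x) (W x)) * \<eta> x (V x)
      + \<eta> x (W x) * (g x (U x) (V x) - \<eta> x (U x) * \<eta> x (V x) - g x (N U x) (V x))"
proof -
  have FU: "Fsec U \<in> \<Gamma>" and FV: "Fsec V \<in> \<Gamma>" using U V by simp_all
  show ?thesis
    using covPhi_skew[OF FU FV W, of x] covPhi_F_second[OF FU W V, of x]
      g_nabla_F_xi[OF U W, of x] g_nabla_F_xi[OF U V, of x]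
    by (simp add: algebra_simps)
qed

text \<open>Solving the three instances of each of the two previous lemmas for the \<open>Fsec\<close>-terms,
  as in the derivation of the Christoffel symbols.\<close>
lemma covPhi_plus_covPhi_F_F:
  assumes X: "X \<in> \<Gamma>" and Y: "Y \<in> \<Gamma>" and Z: "Z \<in> \<Gamma>"
  shows "covPhi X Y (Z x) x + covPhi (Fsec X) (Fsec Y) (Z x) x
    = 2 * g x (X x) (Y x) * \<eta> x (Z x)
      - \<eta> x (Y x) * (g x (X x) (Z x) + g x (N X x) (Z x) + \<eta> x (X x) * \<eta> x (Z x))"
proof -
  have flips: "g x (N Y x) (X x) = g x (N X x) (Y x)" "g x (N Z x) (X x) = g x (N X x) (Z x)"
    "g x (N Z x) (Y x) = g x (N Y x) (Z x)" "g x (Y x) (X x) = g x (X x) (Y x)"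
    "g x (Z x) (X x) = g x (X x) (Z x)" "g x (Z x) (Y x) = g x (Y x) (Z x)"
    using g_N_sym g_sym X Y Z by simp_all
  show ?thesis
    using covPhi_F_F_swap[OF X Z Y, of x] covPhi_F_F_swap[OF Z Y X, of x] covPhi_F_F_swap[OF X Y Z, of x]
      covPhi_F_F_skew[OF X Y Z, of x] covPhi_F_F_skew[OF Z X Y, of x] covPhi_F_F_skew[OF Y Z X, of x]
      covPhi_skew[OF X Z Y, of x] covPhi_skew[OF Y X Z, of x] covPhi_skew[OF Z Y X, of x]
      covPhi_cyclic[OF X Y Z, of x]
    by (simp (no_asm_use) only: flips algebra_simps)
qed

lemma covF_plus_covF_F_F:
  assumes X: "X \<in> \<Gamma>" and Y: "Y \<in> \<Gamma>"
  shows "covF nab F X Y x + covF nab F (Fsec X) (Fsec Y) x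
    = (2 * g x (X x) (Y x)) *\<^sub>R \<xi> x - \<eta> x (Y x) *\<^sub>R (X x + N X x + \<eta> x (X x) *\<^sub>R \<xi> x)"
proof -
  let ?w = "covF nab F X Y x + covF nab F (Fsec X) (Fsec Y) x
    - ((2 * g x (X x) (Y x)) *\<^sub>R \<xi> x - \<eta> x (Y x) *\<^sub>R (X x + N X x + \<eta> x (X x) *\<^sub>R \<xi> x))"
  have "g x ?w (Z x) = 0" if Z: "Z \<in> \<Gamma>" for Z
    using covPhi_plus_covPhi_F_F[OF X Y Z, of x] X Y Z
    by (simp add: g_add_left g_diff_left g_scaleR_left g_xi_eq_eta)
  moreover have "?w \<in> E x" using X Y by simp
  ultimately have "?w = 0" by (intro g_nondegenerate)
  thus ?thesis by simp
qed

end

theorem proposition4p4: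
  fixes E :: "'m \<Rightarrow> 'v::real_vector set" and C :: "('m \<Rightarrow> real) set"
    and \<Gamma> :: "('m \<Rightarrow> 'v) set" and \<rho> :: "('m \<Rightarrow> 'v) \<Rightarrow> ('m \<Rightarrow> real) \<Rightarrow> ('m \<Rightarrow> real)"
    and br :: "('m \<Rightarrow> 'v) \<Rightarrow> ('m \<Rightarrow> 'v) \<Rightarrow> ('m \<Rightarrow> 'v)" and n :: nat
    and F :: "'m \<Rightarrow> 'v \<Rightarrow> 'v" and \<xi> :: "'m \<Rightarrow> 'v" and \<eta> :: "'m \<Rightarrow> 'v \<Rightarrow> real"
    and g :: "'m \<Rightarrow> 'v \<Rightarrow> 'v \<Rightarrow> real"
    and nab :: "('m \<Rightarrow> 'v) \<Rightarrow> ('m \<Rightarrow> 'v) \<Rightarrow> ('m \<Rightarrow> 'v)"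
  assumes "contact_riemannian_lie_algebroid E C \<Gamma> \<rho> br n F \<xi> \<eta> g"
    and "levi_civita C \<Gamma> \<rho> br g nab"
  shows "\<forall>s\<in>\<Gamma>. \<forall>s1\<in>\<Gamma>. \<forall>s2\<in>\<Gamma>.
      (\<lambda>x. g x (N3 br F \<xi> s1 x) (s2 x)) = (\<lambda>x. g x (s1 x) (N3 br F \<xi> s2 x))
    \<and> nab s \<xi> = (\<lambda>x. - F x (s x) - F x (N3 br F \<xi> s x))
    \<and> fapp F (N3 br F \<xi> s) = (\<lambda>x. - N3 br F \<xi> (fapp F s) x)
    \<and> (\<forall>x. fiber_trace (E x) (pw \<Gamma> (N3 br F \<xi>) x) = 0)
    \<and> (\<forall>x. fiber_trace (E x) (pw \<Gamma> (N3 br F \<xi>) x \<circ> F x) = 0)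
    \<and> N3 br F \<xi> \<xi> = (\<lambda>x. 0)
    \<and> (\<forall>x. \<eta> x (N3 br F \<xi> s x) = 0)
    \<and> (\<lambda>x. covF nab F s1 s2 x + covF nab F (fapp F s1) (fapp F s2) x)
        = (\<lambda>x. (2 * g x (s1 x) (s2 x)) *\<^sub>R \<xi> x
               - \<eta> x (s2 x) *\<^sub>R (s1 x + N3 br F \<xi> s1 x + \<eta> x (s1 x) *\<^sub>R \<xi> x))"
proof -
  interpret contact_riemannian_levi_civita E C \<Gamma> \<rho> br n F \<xi> \<eta> g nab
    using assms by unfold_locales
  show ?thesis
  proof (intro ballI conjI allI)
    fix s s1 s2 x assume s: "s \<in> \<Gamma>" and s1: "s1 \<in> \<Gamma>" and s2: "s2 \<in> \<Gamma>"
    show "(\<lambda>x. g x (N s1 x) (s2 x)) = (\<lambda>x. g x (s1 x) (N s2 x))"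
      using g_N_sym[OF s1 s2] by simp
    show "nab s \<xi> = (\<lambda>x. - F x (s x) - F x (N s x))"
      using nabla_xi[OF s] by (simp add: fun_eq_iff)
    show "fapp F (N s) = (\<lambda>x. - N (fapp F s) x)"
      unfolding fapp_def using F_N[OF s] by (simp add: fun_eq_iff)
    show "fiber_trace (E x) (pw \<Gamma> N x) = 0" by (rule trace_N)
    show "fiber_trace (E x) (pw \<Gamma> N x \<circ> F x) = 0" by (rule trace_N_F)
    show "N \<xi> = (\<lambda>x. 0)" by (rule N_xi)
    show "\<eta> x (N s x) = 0" using eta_N[OF s] .
    show "(\<lambda>x. covF nab F s1 s2 x + covF nab F (fapp F s1) (fapp F s2) x)
        = (\<lambda>x. (2 * g x (s1 x) (s2 x)) *\<^sub>R \<xi> x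
               - \<eta> x (s2 x) *\<^sub>R (s1 x + N s1 x + \<eta> x (s1 x) *\<^sub>R \<xi> x))"
      unfolding fapp_def using covF_plus_covF_F_F[OF s1 s2] by (simp add: fun_eq_iff)
  qed
qed

end
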